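(* Let $\varphi\in\mathcal{C}^\infty(S^1,\mathbb{R})$, $\beta\ge0$ and $g\in\mathcal{G}$. (i) The sum defining $V^0_\varphi(g)$ is absolutely convergent; more precisely $$|V^0_\varphi(g)|\le\sum_{a\in J_g}\Big|\frac{\varphi'(g(a+))+\varphi'(g(a-))}{2}-\frac{\varphi(g(a+))-\varphi(g(a-))}{g(a+)-g(a-)}\Big|\le\frac12\int_{S^1}|\varphi''(x)|dx,$$ and $|V^\beta_\varphi(g)|\le(1/2+\beta)\int_{S^1}|\varphi''(x)|dx$. (ii) $$V^\beta_\varphi(g)=\frac{\partial}{\partial t}Y^\beta_{e_{t\varphi}}(g)\Big|_{t=0}=\frac{\partial}{\partial t}Y^\beta_{e+t\varphi}(g)\Big|_{t=0}.$$
   Context: $S^1=\mathbb{R}/\mathbb{Z}$; for $x,y\in S^1$, $y-x$ denotes the length of the positively oriented arc from $x$ to $y$. $\mathcal{G}$ is the set of maps $g:S^1\to S^1$ induced by right continuous nondecreasing $\tilde g:\mathbb{R}\to\mathbb{R}$ with $\tilde g(x+1)=\tilde g(x)+1$; $J_g$ is its set of jump locations and $g(a\pm)$ the one-sided limits. For $\varphi\in\mathcal{C}^\infty(S^1,\mathbb{R})$, $e_{t\varphi}$ denotes the time-$t$ map of the flow of the ODE $\dot x_t=\varphi(x_t)$ on $S^1$, and $e+t\varphi$ the map $x\mapsto x+t\varphi(x)$ (a diffeomorphism for small $|t|$). Define $$V^0_\varphi(g):=\sum_{a\in J_g}\Big[\frac{\varphi'(g(a+))+\varphi'(g(a-))}{2}-\frac{\varphi(g(a+))-\varphi(g(a-))}{g(a+)-g(a-)}\Big],\qquad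 V^\beta_\varphi(g):=V^0_\varphi(g)+\beta\int_{S^1}\varphi'(g(x))dx.$$ For an orientation preserving $\mathcal{C}^2$-diffeomorphism $h$ of $S^1$: $\frac{\delta(h\circ g)}{\delta g}(a):=\frac{h(g(a+))-h(g(a-))}{g(a+)-g(a-)}$, $Y_h^0(g):=\prod_{a\in J_g}\sqrt{h'(g(a-))h'(g(a+))}\big/\frac{\delta(h\circ g)}{\delta g}(a)$, $X_h^\beta(g):=\exp(\beta\int_0^1\log h'(g(s))ds)$ and $Y^\beta_h:=X^\beta_h\cdot Y^0_h$. *)

theory Defs
  imports "HOL-Analysis.Analysis"
begin

(* Circle maps are represented by their lifts to the real line. *)

definition smooth_periodic :: "(real \<Rightarrow> real) \<Rightarrow> bool" where
  "smooth_periodic \<phi> \<longleftrightarrow> (\<forall>x. \<phi> (x + 1) = \<phi> x) \<and>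
     (\<forall>k x. ((deriv ^^ k) \<phi>) differentiable (at x))"

definition in_G :: "(real \<Rightarrow> real) \<Rightarrow> bool" where
  "in_G g \<longleftrightarrow> mono g \<and> (\<forall>x. g (x + 1) = g x + 1) \<and>
     (\<forall>x. continuous (at_right x) g)"

(* left limit g(a-) ; g(a+) = g a by right continuity *)
definition gminus :: "(real \<Rightarrow> real) \<Rightarrow> real \<Rightarrow> real" where
  "gminus g a = Lim (at_left a) g"

(* jump set J_g, represented by points of the fundamental domain [0,1) *)
definition jumps :: "(real \<Rightarrow> real) \<Rightarrow> real set" where
  "jumps g = {a \<in> {0..<1}. gminus g a \<noteq> g a}"

definition V0_term :: "(real \<Rightarrow> real) \<Rightarrow> (real \<Rightarrow> real) \<Rightarrow> real \<Rightarrow> real" where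
  "V0_term \<phi> g a =
     (deriv \<phi> (g a) + deriv \<phi> (gminus g a)) / 2
     - (\<phi> (g a) - \<phi> (gminus g a)) / (g a - gminus g a)"

definition V0 :: "(real \<Rightarrow> real) \<Rightarrow> (real \<Rightarrow> real) \<Rightarrow> real" where
  "V0 \<phi> g = (\<Sum>\<^sub>\<infinity>a\<in>jumps g. V0_term \<phi> g a)"

definition Vbeta :: "real \<Rightarrow> (real \<Rightarrow> real) \<Rightarrow> (real \<Rightarrow> real) \<Rightarrow> real" where
  "Vbeta \<beta> \<phi> g = V0 \<phi> g + \<beta> * integral {0..1} (\<lambda>x. deriv \<phi> (g x))"

definition has_prod_on :: "('a \<Rightarrow> real) \<Rightarrow> 'a set \<Rightarrow> real \<Rightarrow> bool" where
  "has_prod_on f A P \<longleftrightarrow> ((\<lambda>F. prod f F) \<longlongrightarrow> P) (finite_subsets_at_top A)"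

definition infprod_on :: "('a \<Rightarrow> real) \<Rightarrow> 'a set \<Rightarrow> real" where
  "infprod_on f A = Lim (finite_subsets_at_top A) (\<lambda>F. prod f F)"

definition flow :: "(real \<Rightarrow> real) \<Rightarrow> real \<Rightarrow> real \<Rightarrow> real" where
  "flow \<phi> t x = (THE u. u 0 = x \<and> (\<forall>s. (u has_real_derivative \<phi> (u s)) (at s))) t"

definition lin_map :: "(real \<Rightarrow> real) \<Rightarrow> real \<Rightarrow> real \<Rightarrow> real" where
  "lin_map \<phi> t x = x + t * \<phi> x"

definition delta_quot :: "(real \<Rightarrow> real) \<Rightarrow> (real \<Rightarrow> real) \<Rightarrow> real \<Rightarrow> real" where
  "delta_quot h g a = (h (g a) - h (gminus g a)) / (g a - gminus g a)"

definition Y0 :: "(real \<Rightarrow> real) \<Rightarrow> (real \<Rightarrow> real) \<Rightarrow> real" where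
  "Y0 h g = infprod_on
     (\<lambda>a. sqrt (deriv h (gminus g a) * deriv h (g a)) / delta_quot h g a) (jumps g)"

definition Xbeta :: "real \<Rightarrow> (real \<Rightarrow> real) \<Rightarrow> (real \<Rightarrow> real) \<Rightarrow> real" where
  "Xbeta \<beta> h g = exp (\<beta> * integral {0..1} (\<lambda>s. ln (deriv h (g s))))"

definition Ybeta :: "real \<Rightarrow> (real \<Rightarrow> real) \<Rightarrow> (real \<Rightarrow> real) \<Rightarrow> real" where
  "Ybeta \<beta> h g = Xbeta \<beta> h g * Y0 h g"

end

theory Submission
  imports Defs
begin

text \<open>
  On a jump \<open>[p, q] = [g(a-), g(a)]\<close> the term of \<open>V0\<close> is the error of the trapezoid rule for
  \<open>\<integral>\<^sub>p\<^sup>q \<phi>'\<close>, which is at most half the variation \<open>\<integral>\<^sub>p\<^sup>q \<bar>\<phi>''\<bar>\<close>; the jump intervals of \<open>g\<close>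
  are disjoint within one period, so the terms sum to at most \<open>1/2 \<integral>\<bar>\<phi>''\<bar>\<close>. Since \<open>\<phi>'\<close> has a
  zero, also \<open>\<bar>\<phi>'\<bar> \<le> 1/2 \<integral>\<bar>\<phi>''\<bar>\<close>, which bounds the \<open>\<beta>\<close>-part.

  For both \<open>h\<^sub>t = e\<^sub>t\<^sub>\<phi>\<close> and \<open>h\<^sub>t = e + t\<phi>\<close> one has \<open>ln h\<^sub>t' = t\<phi>' + O(t\<^sup>2)\<close>, uniformly and with
  \<open>O(t\<^sup>2)\<close> Lipschitz constant (for the flow, \<open>ln h\<^sub>t' y = \<integral>\<^sub>0\<^sup>t \<phi>'(e\<^sub>s\<^sub>\<phi> y) ds\<close>). Then the
  logarithm of each factor of \<open>Y0\<close> is \<open>t\<close> times the corresponding term of \<open>V0\<close> up to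
  \<open>O(t\<^sup>2)\<close> times the jump size, and \<open>ln X\<^sup>\<beta>\<close> is \<open>t \<beta> \<integral>\<phi>'(g)\<close> up to \<open>O(t\<^sup>2)\<close>. As the jump
  sizes sum to at most 1, \<open>ln Y\<^sup>\<beta>(h\<^sub>t) = t V\<^sup>\<beta> + O(t\<^sup>2)\<close>.
\<close>

section \<open>Calculus on the real line\<close>

lemma periodic_add_of_int:
  fixes f :: "real \<Rightarrow> 'b"
  assumes periodic: "\<And>x. f (x + 1) = f x"
  shows "f (x + real_of_int k) = f x"
proof -
  have add_nat: "f (y + real n) = f y" for y n
  proof (induction n)
    case (Suc n)
    have "f (y + real (Suc n)) = f ((y + real n) + 1)" by (simp add: algebra_simps)
    also have "\<dots> = f y" using periodic Suc by simp
    finally show ?case .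
  qed simp
  show ?thesis
  proof (cases "k \<ge> 0")
    case True
    then show ?thesis using add_nat[of x "nat k"] by simp
  next
    case False
    then have "x = (x + real_of_int k) + real (nat (-k))" by simp
    then show ?thesis using add_nat[of "x + real_of_int k" "nat (-k)"] by metis
  qed
qed

lemma continuous_periodic_bounded:
  fixes f :: "real \<Rightarrow> real"
  assumes cont: "continuous_on UNIV f" and periodic: "\<And>x. f (x + 1) = f x"
  shows "\<exists>M. \<forall>x. \<bar>f x\<bar> \<le> M"
proof -
  have "compact (f ` {0..1})"
    by (rule compact_continuous_image) (auto intro: continuous_on_subset[OF cont])
  then obtain M where M: "\<forall>y\<in>f ` {0..1}. norm y \<le> M"
    using compact_imp_bounded bounded_iff by blast
  have "\<bar>f x\<bar> \<le> M" for x
  proof -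
    have "f x = f (x - real_of_int \<lfloor>x\<rfloor> + real_of_int \<lfloor>x\<rfloor>)" by simp
    also have "\<dots> = f (x - real_of_int \<lfloor>x\<rfloor>)" using periodic_add_of_int[of f, OF periodic] by blast
    finally have "f x = f (x - real_of_int \<lfloor>x\<rfloor>)" .
    moreover have "x - real_of_int \<lfloor>x\<rfloor> \<in> {0..1}"
      by (auto simp: floor_le_iff) linarith
    ultimately show ?thesis using M by force
  qed
  then show ?thesis by blast
qed

lemma periodic_deriv:
  fixes f :: "real \<Rightarrow> real"
  assumes periodic: "\<And>x. f (x + 1) = f x" and diff: "\<And>x. f differentiable (at x)"
  shows "deriv f (x + 1) = deriv f x"
proof -
  have "DERIV f (x + 1) :> deriv f (x + 1)"
    using diff DERIV_deriv_iff_real_differentiable by blast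
  then have "DERIV (\<lambda>x. f (x + 1)) x :> deriv f (x + 1)" by (simp add: DERIV_shift)
  then have "DERIV f x :> deriv f (x + 1)" using periodic by simp
  moreover have "DERIV f x :> deriv f x"
    using diff DERIV_deriv_iff_real_differentiable by blast
  ultimately show ?thesis using DERIV_unique by blast
qed

lemma DERIV_continuous_on_UNIV: "(\<And>x. DERIV f x :> f' x) \<Longrightarrow> continuous_on UNIV f"
  by (meson DERIV_isCont continuous_at_imp_continuous_on)

lemma DERIV_abs_diff_le:
  fixes f :: "real \<Rightarrow> real"
  assumes "convex S" and "\<And>x. x \<in> S \<Longrightarrow> DERIV f x :> f' x"
    and "\<And>x. x \<in> S \<Longrightarrow> \<bar>f' x\<bar> \<le> C" and "a \<in> S" "b \<in> S"
  shows "\<bar>f a - f b\<bar> \<le> C * \<bar>a - b\<bar>"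
  using field_differentiable_bound[OF assms(1) _ _ assms(4,5), of f f' C] assms(2,3)
  by (auto intro: has_field_derivative_at_within)

lemma DERIV_bounded_Lipschitz:
  fixes f :: "real \<Rightarrow> real"
  assumes "\<And>x. DERIV f x :> f' x" and "\<And>x. \<bar>f' x\<bar> \<le> C"
  shows "\<bar>f a - f b\<bar> \<le> C * \<bar>a - b\<bar>"
  by (rule DERIV_abs_diff_le[of UNIV]) (use assms in auto)

lemma DERIV_abs_diff_0_le:
  fixes f :: "real \<Rightarrow> real"
  assumes "\<And>s. DERIV f s :> f' s" and "\<And>s. \<bar>s\<bar> \<le> \<bar>t\<bar> \<Longrightarrow> \<bar>f' s\<bar> \<le> C"
  shows "\<bar>f t - f 0\<bar> \<le> C * \<bar>t\<bar>"
proof -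
  have "\<bar>f t - f 0\<bar> \<le> C * \<bar>t - 0\<bar>"
    by (rule DERIV_abs_diff_le[of "{-\<bar>t\<bar>..\<bar>t\<bar>}"]) (use assms in \<open>auto simp: abs_le_iff\<close>)
  then show ?thesis by simp
qed

lemma DERIV_le_increment:
  fixes F H :: "real \<Rightarrow> real"
  assumes "a \<le> b"
    and dF: "\<And>x. a \<le> x \<Longrightarrow> x \<le> b \<Longrightarrow> DERIV F x :> F' x"
    and dH: "\<And>x. a \<le> x \<Longrightarrow> x \<le> b \<Longrightarrow> DERIV H x :> H' x"
    and le: "\<And>x. a \<le> x \<Longrightarrow> x \<le> b \<Longrightarrow> F' x \<le> H' x"
  shows "F b - F a \<le> H b - H a"
proof -
  have "(\<lambda>x. H x - F x) a \<le> (\<lambda>x. H x - F x) b"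
    using assms(1)
  proof (rule DERIV_nonneg_imp_nondecreasing)
    fix x assume x: "a \<le> x" "x \<le> b"
    show "\<exists>y. DERIV (\<lambda>x. H x - F x) x :> y \<and> 0 \<le> y"
      using DERIV_diff[OF dH[OF x] dF[OF x]] le[OF x] by (intro exI[of _ "H' x - F' x"]) auto
  qed
  then show ?thesis by simp
qed

lemma DERIV_abs_le_increment:
  fixes K R :: "real \<Rightarrow> real"
  assumes "a \<le> b"
    and dK: "\<And>x. a \<le> x \<Longrightarrow> x \<le> b \<Longrightarrow> DERIV K x :> K' x"
    and dR: "\<And>x. a \<le> x \<Longrightarrow> x \<le> b \<Longrightarrow> DERIV R x :> R' x"
    and le: "\<And>x. a \<le> x \<Longrightarrow> x \<le> b \<Longrightarrow> \<bar>K' x\<bar> \<le> R' x"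
  shows "\<bar>K b - K a\<bar> \<le> R b - R a"
proof -
  have "K b - K a \<le> R b - R a"
    using le by (intro DERIV_le_increment[OF assms(1) dK dR]) (auto simp: abs_le_iff)
  moreover have "(\<lambda>x. - K x) b - (\<lambda>x. - K x) a \<le> R b - R a"
    using le by (intro DERIV_le_increment[OF assms(1) DERIV_minus[OF dK] dR]) (auto simp: abs_le_iff)
  ultimately show ?thesis by simp
qed

lemma integral_DERIV_eq:
  fixes W w :: "real \<Rightarrow> real"
  assumes dW: "\<And>x. DERIV W x :> w x" and "a \<le> b"
  shows "integral {a..b} w = W b - W a"
proof -
  have "(w has_integral (W b - W a)) {a..b}"
    using assms(2) by (rule fundamental_theorem_of_calculus)
      (use dW in \<open>auto simp: has_real_derivative_iff_has_vector_derivative[symmetric]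
            intro: has_field_derivative_at_within\<close>)
  then show ?thesis by (rule integral_unique)
qed

lemma DERIV_periodic_increment:
  fixes W w :: "real \<Rightarrow> real"
  assumes dW: "\<And>x. DERIV W x :> w x" and periodic: "\<And>x. w (x + 1) = w x"
  shows "W (c + 1) - W c = W 1 - W 0"
proof -
  have "DERIV (\<lambda>x. W (x + 1) - W x) x :> 0" for x
  proof -
    have "DERIV (\<lambda>x. W (x + 1)) x :> w (x + 1)"
      using dW[of "x + 1"] by (simp add: DERIV_shift)
    then have "DERIV (\<lambda>x. W (x + 1) - W x) x :> w (x + 1) - w x"
      using dW by (intro DERIV_diff) auto
    then show ?thesis using periodic by simp
  qed
  then show ?thesis using DERIV_isconst_all[of "\<lambda>x. W (x + 1) - W x" c 0] by simp
qed

definition antideriv :: "(real \<Rightarrow> real) \<Rightarrow> real \<Rightarrow> real" where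
  "antideriv f = (SOME F. \<forall>x. DERIV F x :> f x)"

lemma DERIV_antideriv:
  assumes "continuous_on UNIV f"
  shows "DERIV (antideriv f) x :> f x"
proof -
  have "\<exists>F. \<forall>x. -\<infinity> < ereal x \<longrightarrow> ereal x < \<infinity> \<longrightarrow> (F has_vector_derivative f x) (at x)"
    by (rule einterval_antiderivative) (use assms in \<open>auto simp: continuous_on_eq_continuous_at\<close>)
  then have "\<exists>F. \<forall>x. DERIV F x :> f x"
    by (auto simp: has_real_derivative_iff_has_vector_derivative)
  then show ?thesis unfolding antideriv_def by (rule someI_ex[THEN spec])
qed

lemma smooth_periodic_periodic: "smooth_periodic \<phi> \<Longrightarrow> \<phi> (x + 1) = \<phi> x"
  by (simp add: smooth_periodic_def)

lemma smooth_periodic_DERIV: "smooth_periodic \<phi> \<Longrightarrow> DERIV \<phi> x :> deriv \<phi> x"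
  using DERIV_deriv_iff_real_differentiable smooth_periodic_def
  by (metis funpow_0)

lemma smooth_periodic_deriv:
  assumes "smooth_periodic \<phi>"
  shows "smooth_periodic (deriv \<phi>)"
proof -
  have "deriv \<phi> (x + 1) = deriv \<phi> x" for x
    by (rule periodic_deriv) (use assms smooth_periodic_DERIV in \<open>auto simp: smooth_periodic_def
          real_differentiable_def\<close>)
  moreover have "((deriv ^^ k) (deriv \<phi>)) differentiable (at x)" for k x
    using assms unfolding smooth_periodic_def by (metis funpow_Suc_right o_apply)
  ultimately show ?thesis by (simp add: smooth_periodic_def)
qed

lemma smooth_periodic_continuous: "smooth_periodic \<phi> \<Longrightarrow> continuous_on UNIV \<phi>"
  using DERIV_continuous_on_UNIV smooth_periodic_DERIV by blast

lemma smooth_periodic_bounded: "smooth_periodic \<phi> \<Longrightarrow> \<exists>M. \<forall>x. \<bar>\<phi> x\<bar> \<le> M"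
  by (intro continuous_periodic_bounded smooth_periodic_continuous smooth_periodic_periodic)


section \<open>Left limits and jumps of maps in \<open>\<G>\<close>\<close>

lemma in_G_mono: "in_G g \<Longrightarrow> mono g"
  by (simp add: in_G_def)

lemma in_G_add_1: "in_G g \<Longrightarrow> g (x + 1) = g x + 1"
  by (simp add: in_G_def)

lemma gminus_eq_Sup:
  fixes g :: "real \<Rightarrow> real"
  assumes "mono g"
  shows "gminus g a = Sup (g ` {..<a})"
proof -
  let ?S = "Sup (g ` {..<a})"
  have bdd: "bdd_above (g ` {..<a})"
    by (rule bdd_aboveI[of _ "g a"]) (auto intro: monoD[OF assms])
  have ne: "g ` {..<a} \<noteq> {}" by (auto intro: exI[of _ "a - 1"])
  have "(g \<longlongrightarrow> ?S) (at_left a)"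
  proof (rule order_tendstoI)
    fix y assume "y < ?S"
    then obtain x0 where x0: "x0 < a" "y < g x0"
      using less_cSup_iff[OF ne bdd] by auto
    have "\<forall>\<^sub>F x in at_left a. x \<in> {x0<..<a}" by (rule eventually_at_left_real[OF x0(1)])
    then show "\<forall>\<^sub>F x in at_left a. y < g x"
    proof (rule eventually_mono)
      fix x assume "x \<in> {x0<..<a}"
      then have "g x0 \<le> g x" by (auto intro: monoD[OF assms])
      then show "y < g x" using x0 by simp
    qed
  next
    fix y assume "?S < y"
    have "\<forall>\<^sub>F x in at_left a. x < a" by (simp add: eventually_at_filter)
    then show "\<forall>\<^sub>F x in at_left a. g x < y"
    proof (rule eventually_mono)
      fix x assume "x < a"
      then have "g x \<le> ?S" using bdd by (auto intro: cSup_upper)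
      then show "g x < y" using \<open>?S < y\<close> by simp
    qed
  qed
  then show ?thesis unfolding gminus_def using tendsto_Lim trivial_limit_at_left_real by blast
qed

lemma le_gminus:
  assumes "mono g" "x < a"
  shows "g x \<le> gminus g a"
proof -
  have "bdd_above (g ` {..<a})"
    by (rule bdd_aboveI[of _ "g a"]) (auto intro: monoD[OF assms(1)])
  then show ?thesis unfolding gminus_eq_Sup[OF assms(1)] using assms(2) by (auto intro: cSup_upper)
qed

lemma gminus_le:
  assumes "mono g" "\<And>x. x < a \<Longrightarrow> g x \<le> M"
  shows "gminus g a \<le> M"
  unfolding gminus_eq_Sup[OF assms(1)] using assms(2)
  by (intro cSup_least) (auto intro: exI[of _ "a - 1"])

lemma gminus_le_self: "mono g \<Longrightarrow> gminus g a \<le> g a"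
  by (rule gminus_le) (auto intro: monoD)

lemma gminus_less_jump:
  assumes "in_G g" "a \<in> jumps g"
  shows "gminus g a < g a"
  using gminus_le_self[OF in_G_mono[OF assms(1)], of a] assms(2) by (auto simp: jumps_def)

lemma jump_size_le_1:
  assumes "in_G g"
  shows "g a - gminus g a \<le> 1"
  using le_gminus[OF in_G_mono[OF assms], of "a - 1" a] in_G_add_1[OF assms, of "a - 1"] by simp

lemma jump_within_period:
  assumes "in_G g" "a \<in> jumps g"
  shows "gminus g 0 \<le> gminus g a" "g a \<le> gminus g 0 + 1"
proof -
  have m: "mono g" using in_G_mono[OF assms(1)] .
  have a: "0 \<le> a" "a < 1" using assms(2) unfolding jumps_def by auto
  show "gminus g 0 \<le> gminus g a"
    by (rule gminus_le[OF m]) (use a in \<open>auto intro: le_gminus[OF m]\<close>)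
  have "g a \<le> gminus g 1" by (rule le_gminus[OF m a(2)])
  also have "gminus g 1 \<le> gminus g 0 + 1"
  proof (rule gminus_le[OF m])
    fix x :: real assume "x < 1"
    then show "g x \<le> gminus g 0 + 1"
      using le_gminus[OF m, of "x - 1" 0] in_G_add_1[OF assms(1), of "x - 1"] by simp
  qed
  finally show "g a \<le> gminus g 0 + 1" .
qed

lemma sum_disjoint_increments_le:
  fixes F :: "real set" and P Q W :: "real \<Rightarrow> real"
  assumes "finite F" and W_mono: "\<And>x y. x \<le> y \<Longrightarrow> W x \<le> W y"
  shows "(\<forall>a\<in>F. c \<le> P a \<and> P a \<le> Q a \<and> Q a \<le> e) \<Longrightarrow>
         (\<forall>a\<in>F. \<forall>b\<in>F. a < b \<longrightarrow> Q a \<le> P b) \<Longrightarrow> c \<le> e \<Longrightarrow>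
         (\<Sum>a\<in>F. W (Q a) - W (P a)) \<le> W e - W c"
  using assms(1)
proof (induction F arbitrary: e rule: finite_linorder_max_induct)
  case empty
  then show ?case using W_mono[of c e] by simp
next
  case (insert m F)
  have "(\<Sum>a\<in>F. W (Q a) - W (P a)) \<le> W (P m) - W c"
    using insert.prems insert.hyps by (intro insert.IH) auto
  moreover have "W (Q m) \<le> W e" using insert.prems by (intro W_mono) auto
  moreover have "m \<notin> F" using insert.hyps by auto
  ultimately show ?case using insert.hyps by (simp add: sum.insert)
qed

lemma sum_jump_increments_le:
  fixes W :: "real \<Rightarrow> real"
  assumes g: "in_G g" and W_mono: "\<And>x y. x \<le> y \<Longrightarrow> W x \<le> W y"
    and F: "finite F" "F \<subseteq> jumps g"
  shows "(\<Sum>a\<in>F. W (g a) - W (gminus g a)) \<le> W (gminus g 0 + 1) - W (gminus g 0)"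
proof (rule sum_disjoint_increments_le[OF F(1) W_mono])
  show "\<forall>a\<in>F. gminus g 0 \<le> gminus g a \<and> gminus g a \<le> g a \<and> g a \<le> gminus g 0 + 1"
    using F(2) jump_within_period[OF g] gminus_le_self[OF in_G_mono[OF g]] by blast
  show "\<forall>a\<in>F. \<forall>b\<in>F. a < b \<longrightarrow> g a \<le> gminus g b"
    using le_gminus[OF in_G_mono[OF g]] by blast
qed auto

lemma jump_sizes_summable:
  assumes "in_G g"
  shows "(\<lambda>a. g a - gminus g a) summable_on jumps g"
    and "(\<Sum>\<^sub>\<infinity>a\<in>jumps g. g a - gminus g a) \<le> 1"
proof -
  have sums: "(\<Sum>a\<in>F. g a - gminus g a) \<le> 1" if "finite F" "F \<subseteq> jumps g" for F
    using sum_jump_increments_le[OF assms _ that, of "\<lambda>x. x"] by simp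
  show summable: "(\<lambda>a. g a - gminus g a) summable_on jumps g"
    by (rule nonneg_bdd_above_summable_on)
      (use gminus_less_jump[OF assms] sums in \<open>auto simp: less_imp_le intro!: bdd_aboveI2[of _ _ 1]\<close>)
  show "(\<Sum>\<^sub>\<infinity>a\<in>jumps g. g a - gminus g a) \<le> 1"
    by (rule infsum_le_finite_sums[OF summable sums])
qed

section \<open>Absolute convergence of \<open>V0\<close>\<close>

text \<open>The scaled error \<open>K\<close> below has derivative \<open>(\<psi> p - \<psi> x)/2 + (x - p) \<psi>2 x / 2\<close>, both of
  whose parts are controlled by the variation \<open>W\<close> of \<open>\<psi>\<close>.\<close>
lemma trapezoid_error_le:
  fixes \<phi> \<psi> \<psi>2 W :: "real \<Rightarrow> real"
  assumes d1: "\<And>x. DERIV \<phi> x :> \<psi> x" and d2: "\<And>x. DERIV \<psi> x :> \<psi>2 x"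
    and dW: "\<And>x. DERIV W x :> \<bar>\<psi>2 x\<bar>" and "p < q"
  shows "\<bar>(\<psi> q + \<psi> p) / 2 - (\<phi> q - \<phi> p) / (q - p)\<bar> \<le> (W q - W p) / 2"
proof -
  have \<psi>_variation: "\<bar>\<psi> x - \<psi> p\<bar> \<le> W x - W p" if "p \<le> x" for x
    using that by (rule DERIV_abs_le_increment) (use d2 dW in auto)
  define K where "K x = (x - p) * (\<psi> p + \<psi> x) / 2 - (\<phi> x - \<phi> p)" for x
  define R where "R x = (x - p) * (W x - W p) / 2" for x
  have dK: "DERIV K x :> (\<psi> p - \<psi> x) / 2 + (x - p) * \<psi>2 x / 2" for x
    unfolding K_def by (auto intro!: derivative_eq_intros d1 d2 simp: field_simps)
  have dR: "DERIV R x :> (W x - W p) / 2 + (x - p) * \<bar>\<psi>2 x\<bar> / 2" for x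
    unfolding R_def by (auto intro!: derivative_eq_intros dW simp: field_simps)
  have "\<bar>K q - K p\<bar> \<le> R q - R p"
  proof (rule DERIV_abs_le_increment[OF _ dK dR])
    fix x assume x: "p \<le> x" "x \<le> q"
    have "\<bar>(\<psi> p - \<psi> x) / 2 + (x - p) * \<psi>2 x / 2\<bar> \<le> \<bar>\<psi> x - \<psi> p\<bar> / 2 + (x - p) * \<bar>\<psi>2 x\<bar> / 2"
      using x abs_triangle_ineq[of "(\<psi> p - \<psi> x) / 2" "(x - p) * \<psi>2 x / 2"]
      by (simp add: abs_mult abs_minus_commute)
    also have "\<dots> \<le> (W x - W p) / 2 + (x - p) * \<bar>\<psi>2 x\<bar> / 2" using \<psi>_variation[OF x(1)] by simp
    finally show "\<bar>(\<psi> p - \<psi> x) / 2 + (x - p) * \<psi>2 x / 2\<bar> \<le> (W x - W p) / 2 + (x - p) * \<bar>\<psi>2 x\<bar> / 2" .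
  qed (use \<open>p < q\<close> in simp)
  then have "\<bar>K q\<bar> \<le> (q - p) * (W q - W p) / 2" by (simp add: K_def R_def)
  moreover have "(\<psi> q + \<psi> p) / 2 - (\<phi> q - \<phi> p) / (q - p) = K q / (q - p)"
    using \<open>p < q\<close> by (simp add: K_def field_simps)
  ultimately show ?thesis using \<open>p < q\<close> by (simp add: divide_le_eq abs_divide mult.commute)
qed

text \<open>A periodic \<open>\<psi> = \<phi>'\<close> vanishes somewhere, so over one period it varies by at least \<open>2 \<bar>\<psi> y\<bar>\<close>.\<close>
lemma periodic_deriv_abs_le_variation:
  fixes \<phi> \<psi> \<psi>2 W :: "real \<Rightarrow> real"
  assumes d1: "\<And>x. DERIV \<phi> x :> \<psi> x" and d2: "\<And>x. DERIV \<psi> x :> \<psi>2 x"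
    and dW: "\<And>x. DERIV W x :> \<bar>\<psi>2 x\<bar>"
    and p0: "\<And>x. \<phi> (x + 1) = \<phi> x" and p1: "\<And>x. \<psi> (x + 1) = \<psi> x"
    and p2: "\<And>x. \<psi>2 (x + 1) = \<psi>2 x"
  shows "2 * \<bar>\<psi> y\<bar> \<le> W 1 - W 0"
proof -
  obtain z where z: "0 < z" "z < 1" "\<phi> 1 - \<phi> 0 = (1 - 0) * \<psi> z"
    using MVT2[of 0 1 \<phi> \<psi>] d1 by auto
  have zero: "\<psi> z = 0" using z p0[of 0] by simp
  define y' where "y' = y - real_of_int \<lfloor>y - z\<rfloor>"
  have y': "z \<le> y'" "y' \<le> z + 1" unfolding y'_def by linarith+
  have "\<psi> y = \<psi> (y' + real_of_int \<lfloor>y - z\<rfloor>)" unfolding y'_def by simp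
  also have "\<dots> = \<psi> y'" using periodic_add_of_int[of \<psi>, OF p1] by blast
  finally have yy: "\<psi> y = \<psi> y'" .
  have "\<bar>\<psi> y' - \<psi> z\<bar> \<le> W y' - W z"
    using y'(1) by (rule DERIV_abs_le_increment) (use d2 dW in auto)
  moreover have "\<bar>\<psi> (z + 1) - \<psi> y'\<bar> \<le> W (z + 1) - W y'"
    using y'(2) by (rule DERIV_abs_le_increment) (use d2 dW in auto)
  moreover have "W (z + 1) - W z = W 1 - W 0"
    by (rule DERIV_periodic_increment[OF dW]) (use p2 in simp)
  ultimately show ?thesis using zero p1[of z] yy by linarith
qed

lemma integrable_comp_mono:
  fixes f g :: "real \<Rightarrow> real"
  assumes c: "continuous_on UNIV f" and m: "mono g" and bd: "\<And>x. \<bar>f x\<bar> \<le> M"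
  shows "(\<lambda>x. f (g x)) integrable_on {a..b}"
proof (rule measurable_bounded_by_integrable_imp_integrable_real)
  have "g \<in> borel_measurable borel" by (rule borel_measurable_mono[OF m])
  then have "(\<lambda>x. g (id x)) \<in> borel_measurable (lebesgue_on {a..b})"
    by (rule measurable_compose[OF id_borel_measurable_lebesgue_on])
  then have "g \<in> borel_measurable (lebesgue_on {a..b})" by simp
  then show "(\<lambda>x. f (g x)) \<in> borel_measurable (lebesgue_on {a..b})"
    by (rule borel_measurable_continuous_on[OF c])
  show "(\<lambda>x. M) integrable_on {a..b}" by (rule integrable_continuous_interval) (rule continuous_on_const)
  show "\<And>x. x \<in> {a..b} \<Longrightarrow> \<bar>f (g x)\<bar> \<le> M" using bd by simp
  show "{a..b} \<in> sets lebesgue" by simp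
qed

lemma integral_01_const: "integral {0..1::real} (\<lambda>s. c) = (c::real)"
  using integral_unique[OF has_integral_const_real[of c 0 1]] by simp


lemma variation_function:
  assumes "smooth_periodic \<phi>"
  obtains W where "\<And>x. DERIV W x :> \<bar>deriv (deriv \<phi>) x\<bar>" and "\<And>x y. x \<le> y \<Longrightarrow> W x \<le> W y"
    and "\<And>c. W (c + 1) - W c = integral {0..1} (\<lambda>x. \<bar>deriv (deriv \<phi>) x\<bar>)"
proof
  define W where "W = antideriv (\<lambda>x. \<bar>deriv (deriv \<phi>) x\<bar>)"
  have \<phi>2: "smooth_periodic (deriv (deriv \<phi>))" using assms by (intro smooth_periodic_deriv)
  show dW: "DERIV W x :> \<bar>deriv (deriv \<phi>) x\<bar>" for x
    unfolding W_def by (intro DERIV_antideriv continuous_intros smooth_periodic_continuous[OF \<phi>2])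
  show "W x \<le> W y" if "x \<le> y" for x y
    using that by (rule DERIV_nonneg_imp_nondecreasing) (use dW abs_ge_zero in blast)
  have "W (c + 1) - W c = W 1 - W 0" for c
    by (rule DERIV_periodic_increment[OF dW]) (simp add: smooth_periodic_periodic[OF \<phi>2])
  moreover have "integral {0..1} (\<lambda>x. \<bar>deriv (deriv \<phi>) x\<bar>) = W 1 - W 0"
    by (rule integral_DERIV_eq[OF dW]) simp
  ultimately show "W (c + 1) - W c = integral {0..1} (\<lambda>x. \<bar>deriv (deriv \<phi>) x\<bar>)" for c
    by simp
qed

lemma V0_terms_summable:
  assumes \<phi>: "smooth_periodic \<phi>" and g: "in_G g"
  shows "(\<lambda>a. \<bar>V0_term \<phi> g a\<bar>) summable_on jumps g"
    and "(\<Sum>\<^sub>\<infinity>a\<in>jumps g. \<bar>V0_term \<phi> g a\<bar>) \<le> 1/2 * integral {0..1} (\<lambda>x. \<bar>deriv (deriv \<phi>) x\<bar>)"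
proof -
  let ?I = "integral {0..1} (\<lambda>x. \<bar>deriv (deriv \<phi>) x\<bar>)"
  obtain W where dW: "\<And>x. DERIV W x :> \<bar>deriv (deriv \<phi>) x\<bar>"
    and W_mono: "\<And>x y. x \<le> y \<Longrightarrow> W x \<le> W y"
    and W_period: "\<And>c. W (c + 1) - W c = integral {0..1} (\<lambda>x. \<bar>deriv (deriv \<phi>) x\<bar>)"
    using variation_function[OF \<phi>] by blast
  have sums: "(\<Sum>a\<in>F. \<bar>V0_term \<phi> g a\<bar>) \<le> 1/2 * integral {0..1} (\<lambda>x. \<bar>deriv (deriv \<phi>) x\<bar>)"
    if F: "finite F" "F \<subseteq> jumps g" for F
  proof -
    have "(\<Sum>a\<in>F. \<bar>V0_term \<phi> g a\<bar>) \<le> (\<Sum>a\<in>F. (W (g a) - W (gminus g a)) / 2)"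
      proof (rule sum_mono)
      fix a assume "a \<in> F"
      then have "gminus g a < g a" using F gminus_less_jump[OF g] by blast
      then show "\<bar>V0_term \<phi> g a\<bar> \<le> (W (g a) - W (gminus g a)) / 2"
        unfolding V0_term_def by (rule trapezoid_error_le[OF smooth_periodic_DERIV[OF \<phi>]
            smooth_periodic_DERIV[OF smooth_periodic_deriv[OF \<phi>]] dW])
    qed
    also have "\<dots> = 1/2 * (\<Sum>a\<in>F. W (g a) - W (gminus g a))" by (simp add: sum_divide_distrib)
    also have "\<dots> \<le> 1/2 * (W (gminus g 0 + 1) - W (gminus g 0))"
      using sum_jump_increments_le[OF g W_mono F] by simp
    also have "\<dots> = 1/2 * ?I" by (simp only: W_period)
    finally show ?thesis .
  qed
  show summable: "(\<lambda>a. \<bar>V0_term \<phi> g a\<bar>) summable_on jumps g"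
    by (rule nonneg_bdd_above_summable_on) (use sums in \<open>auto intro!: bdd_aboveI2[of _ _ "1/2 * ?I"]\<close>)
  show "(\<Sum>\<^sub>\<infinity>a\<in>jumps g. \<bar>V0_term \<phi> g a\<bar>) \<le> 1/2 * integral {0..1} (\<lambda>x. \<bar>deriv (deriv \<phi>) x\<bar>)"
    by (rule infsum_le_finite_sums[OF summable sums])
qed

lemma abs_V0_le: "(\<lambda>a. \<bar>V0_term \<phi> g a\<bar>) summable_on jumps g \<Longrightarrow>
    \<bar>V0 \<phi> g\<bar> \<le> (\<Sum>\<^sub>\<infinity>a\<in>jumps g. \<bar>V0_term \<phi> g a\<bar>)"
  using norm_infsum_bound[of "V0_term \<phi> g" "jumps g"] by (simp add: V0_def)

lemma abs_deriv_le_half_variation: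
  assumes \<phi>: "smooth_periodic \<phi>"
  shows "\<bar>deriv \<phi> y\<bar> \<le> 1/2 * integral {0..1} (\<lambda>x. \<bar>deriv (deriv \<phi>) x\<bar>)"
proof -
  obtain W where dW: "\<And>x. DERIV W x :> \<bar>deriv (deriv \<phi>) x\<bar>"
    and "\<And>x y. x \<le> y \<Longrightarrow> W x \<le> W y"
    and W_period: "\<And>c. W (c + 1) - W c = integral {0..1} (\<lambda>x. \<bar>deriv (deriv \<phi>) x\<bar>)"
    using variation_function[OF \<phi>] by blast
  have \<phi>1: "smooth_periodic (deriv \<phi>)" and \<phi>2: "smooth_periodic (deriv (deriv \<phi>))"
    using \<phi> by (auto intro: smooth_periodic_deriv)
  have "2 * \<bar>deriv \<phi> y\<bar> \<le> W 1 - W 0"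
    by (rule periodic_deriv_abs_le_variation[OF smooth_periodic_DERIV[OF \<phi>]
          smooth_periodic_DERIV[OF \<phi>1] dW smooth_periodic_periodic[OF \<phi>]
          smooth_periodic_periodic[OF \<phi>1] smooth_periodic_periodic[OF \<phi>2]])
  moreover have "W 1 - W 0 = integral {0..1} (\<lambda>x. \<bar>deriv (deriv \<phi>) x\<bar>)"
    using W_period[of 0] by (simp only: add_0)
  ultimately show ?thesis by linarith
qed

lemma abs_Vbeta_le:
  assumes \<phi>: "smooth_periodic \<phi>" and "0 \<le> \<beta>" and g: "in_G g"
  shows "\<bar>Vbeta \<beta> \<phi> g\<bar> \<le> (1/2 + \<beta>) * integral {0..1} (\<lambda>x. \<bar>deriv (deriv \<phi>) x\<bar>)"
proof -
  let ?I = "integral {0..1} (\<lambda>x. \<bar>deriv (deriv \<phi>) x\<bar>)"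
  obtain M where M: "\<And>x. \<bar>deriv \<phi> x\<bar> \<le> M"
    using smooth_periodic_bounded[OF smooth_periodic_deriv[OF \<phi>]] by blast
  have "(\<lambda>s. deriv \<phi> (g s)) integrable_on {0..1}"
    by (rule integrable_comp_mono[OF _ in_G_mono[OF g] M])
      (rule smooth_periodic_continuous[OF smooth_periodic_deriv[OF \<phi>]])
  then have "norm (integral {0..1} (\<lambda>x. deriv \<phi> (g x))) \<le> integral {0..1} (\<lambda>x::real. ?I / 2)"
    by (rule Henstock_Kurzweil_Integration.integral_norm_bound_integral)
      (use abs_deriv_le_half_variation[OF \<phi>] in auto)
  then have integral_le: "\<bar>integral {0..1} (\<lambda>x. deriv \<phi> (g x))\<bar> \<le> ?I / 2" by simp
  have V0_le: "\<bar>V0 \<phi> g\<bar> \<le> ?I / 2"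
    using abs_V0_le[OF V0_terms_summable(1)[OF \<phi> g]] V0_terms_summable(2)[OF \<phi> g] by simp
  have "\<bar>Vbeta \<beta> \<phi> g\<bar> \<le> \<bar>V0 \<phi> g\<bar> + \<beta> * \<bar>integral {0..1} (\<lambda>x. deriv \<phi> (g x))\<bar>"
    using abs_triangle_ineq[of "V0 \<phi> g" "\<beta> * integral {0..1} (\<lambda>x. deriv \<phi> (g x))"] \<open>0 \<le> \<beta>\<close>
    by (simp add: Vbeta_def abs_mult)
  also have "\<dots> \<le> ?I / 2 + \<beta> * (?I / 2)"
    using V0_le integral_le \<open>0 \<le> \<beta>\<close> by (intro add_mono mult_left_mono) auto
  also have "\<dots> \<le> (1/2 + \<beta>) * ?I"
    using \<open>0 \<le> \<beta>\<close> abs_deriv_le_half_variation[OF \<phi>, of 0] by (simp add: algebra_simps)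
  finally show ?thesis .
qed


section \<open>The logarithm of one jump factor\<close>

lemma exp_le_one_plus_square:
  fixes u :: real
  assumes "\<bar>u\<bar> \<le> 1"
  shows "exp u \<le> 1 + u + u\<^sup>2"
proof (cases "0 \<le> u")
  case True then show ?thesis using exp_bound[of u] assms by simp
next
  case False
  have "1 + (-u) \<le> exp (-u)" by (rule exp_ge_add_one_self)
  then have "exp u * (1 - u) \<le> exp u * exp (-u)" by (intro mult_left_mono) auto
  then have "exp u * (1 - u) \<le> 1" by (simp add: exp_minus field_simps)
  moreover have "1 \<le> (1 - u) * (1 + u + u\<^sup>2)"
  proof -
    have "(1 - u) * (1 + u + u\<^sup>2) = 1 - u ^ 3"
      by (simp add: power2_eq_square power3_eq_cube algebra_simps)
    moreover have "u ^ 3 < 0" using False by (simp add: power_less_zero_eq)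
    ultimately show ?thesis by linarith
  qed
  ultimately have "exp u * (1 - u) \<le> (1 + u + u\<^sup>2) * (1 - u)" by (simp add: mult.commute)
  then show ?thesis using False by (simp add: mult_le_cancel_right)
qed

lemma ln_one_plus_ge:
  fixes v :: real
  assumes "\<bar>v\<bar> \<le> 1/2"
  shows "v - 2 * v\<^sup>2 \<le> ln (1 + v)"
proof (cases "0 \<le> v")
  case True
  then have "v - v\<^sup>2 \<le> ln (1 + v)" using ln_one_plus_pos_lower_bound[of v] assms by simp
  then show ?thesis using zero_le_power2[of v] by linarith
next
  case False
  then show ?thesis using ln_one_minus_pos_lower_bound[of "-v"] assms by simp
qed

text \<open>If \<open>H' = exp (c + e + u)\<close> with \<open>\<bar>e\<bar> \<le> \<delta>\<close> and \<open>\<bar>u\<bar> \<le> \<omega>\<close>, compare \<open>H\<close> with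
  \<open>exp (c \<plusminus> \<delta>)\<close> times primitives of \<open>1 + u \<le> exp u \<le> 1 + u + \<omega>\<^sup>2\<close>.\<close>
lemma increment_exp_lower_bound:
  fixes H U u e :: "real \<Rightarrow> real"
  assumes pq: "p \<le> q"
    and dH: "\<And>y. p \<le> y \<Longrightarrow> y \<le> q \<Longrightarrow> DERIV H y :> exp (c + e y + u y)"
    and dU: "\<And>y. DERIV U y :> u y"
    and e: "\<And>y. p \<le> y \<Longrightarrow> y \<le> q \<Longrightarrow> \<bar>e y\<bar> \<le> \<delta>"
    and u: "\<And>y. p \<le> y \<Longrightarrow> y \<le> q \<Longrightarrow> \<bar>u y\<bar> \<le> 1"
  shows "exp c * exp (- \<delta>) * ((q - p) + (U q - U p)) \<le> H q - H p"
proof -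
  have "exp c * exp (- \<delta>) * (q + U q) - exp c * exp (- \<delta>) * (p + U p) \<le> H q - H p"
  proof (rule DERIV_le_increment[OF pq _ dH])
    fix y assume y: "p \<le> y" "y \<le> q"
    show "DERIV (\<lambda>y. exp c * exp (- \<delta>) * (y + U y)) y :> exp c * exp (- \<delta>) * (1 + u y)"
      by (auto intro!: derivative_eq_intros dU)
    have "exp (- \<delta>) \<le> exp (e y)" using e[OF y] by simp
    moreover have "1 + u y \<le> exp (u y)" by (rule exp_ge_add_one_self)
    moreover have "0 \<le> 1 + u y" using u[OF y] by linarith
    ultimately have "exp (- \<delta>) * (1 + u y) \<le> exp (e y) * exp (u y)" by (intro mult_mono) auto
    then have "exp c * (exp (- \<delta>) * (1 + u y)) \<le> exp c * (exp (e y) * exp (u y))" by simp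
    then show "exp c * exp (- \<delta>) * (1 + u y) \<le> exp (c + e y + u y)" by (simp add: exp_add mult.assoc)
  qed
  then show ?thesis by (simp add: algebra_simps)
qed

lemma increment_exp_upper_bound:
  fixes H U u e :: "real \<Rightarrow> real"
  assumes pq: "p \<le> q"
    and dH: "\<And>y. p \<le> y \<Longrightarrow> y \<le> q \<Longrightarrow> DERIV H y :> exp (c + e y + u y)"
    and dU: "\<And>y. DERIV U y :> u y"
    and e: "\<And>y. p \<le> y \<Longrightarrow> y \<le> q \<Longrightarrow> \<bar>e y\<bar> \<le> \<delta>"
    and u: "\<And>y. p \<le> y \<Longrightarrow> y \<le> q \<Longrightarrow> \<bar>u y\<bar> \<le> \<omega>" and \<omega>: "\<omega> \<le> 1"
  shows "H q - H p \<le> exp c * exp \<delta> * ((q - p) * (1 + \<omega>\<^sup>2) + (U q - U p))"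
proof -
  have "H q - H p \<le> exp c * exp \<delta> * (q * (1 + \<omega>\<^sup>2) + U q) - exp c * exp \<delta> * (p * (1 + \<omega>\<^sup>2) + U p)"
  proof (rule DERIV_le_increment[OF pq dH])
    fix y assume y: "p \<le> y" "y \<le> q"
    show "DERIV (\<lambda>y. exp c * exp \<delta> * (y * (1 + \<omega>\<^sup>2) + U y)) y :> exp c * exp \<delta> * (1 + u y + \<omega>\<^sup>2)"
      by (auto intro!: derivative_eq_intros dU simp: algebra_simps)
    have "exp (e y) \<le> exp \<delta>" using e[OF y] by simp
    moreover have "exp (u y) \<le> 1 + u y + (u y)\<^sup>2" using u[OF y] \<omega> by (intro exp_le_one_plus_square) linarith
    moreover have "(u y)\<^sup>2 \<le> \<omega>\<^sup>2" using power_mono[OF u[OF y] abs_ge_zero, of 2] by simp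
    ultimately have "exp (e y) * exp (u y) \<le> exp \<delta> * (1 + u y + \<omega>\<^sup>2)" by (intro mult_mono) auto
    then have "exp c * (exp (e y) * exp (u y)) \<le> exp c * (exp \<delta> * (1 + u y + \<omega>\<^sup>2))" by simp
    then show "exp (c + e y + u y) \<le> exp c * exp \<delta> * (1 + u y + \<omega>\<^sup>2)" by (simp add: exp_add mult.assoc)
  qed
  then show ?thesis by (simp add: algebra_simps)
qed

lemma ln_mean_exp_estimate:
  fixes H U u e :: "real \<Rightarrow> real"
  assumes pq: "p < q"
    and dH: "\<And>y. p \<le> y \<Longrightarrow> y \<le> q \<Longrightarrow> DERIV H y :> exp (c + e y + u y)"
    and dU: "\<And>y. DERIV U y :> u y"
    and e: "\<And>y. p \<le> y \<Longrightarrow> y \<le> q \<Longrightarrow> \<bar>e y\<bar> \<le> \<delta>"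
    and u: "\<And>y. p \<le> y \<Longrightarrow> y \<le> q \<Longrightarrow> \<bar>u y\<bar> \<le> \<omega>" and \<omega>: "\<omega> \<le> 1/2"
  shows "0 < H q - H p"
    and "\<bar>ln ((H q - H p) / (q - p)) - c - (U q - U p) / (q - p)\<bar> \<le> \<delta> + 2 * \<omega>\<^sup>2"
proof -
  define v where "v = (U q - U p) / (q - p)"
  obtain \<xi> where \<xi>: "p < \<xi>" "\<xi> < q" "U q - U p = (q - p) * u \<xi>"
    using MVT2[OF pq, of U u] dU by blast
  have v: "\<bar>v\<bar> \<le> \<omega>" using u[of \<xi>] \<xi> pq by (simp add: v_def)
  have v_pos: "0 < 1 + v" using v \<omega> by linarith
  have increment: "(q - p) + (U q - U p) = (q - p) * (1 + v)"
    "(q - p) * (1 + \<omega>\<^sup>2) + (U q - U p) = (q - p) * (1 + v + \<omega>\<^sup>2)"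
    using pq by (simp_all add: v_def field_simps)
  have \<omega>1: "\<omega> \<le> 1" using \<omega> by simp
  have u1: "\<bar>u y\<bar> \<le> 1" if "p \<le> y" "y \<le> q" for y using u[OF that] \<omega> by linarith
  have low: "exp c * exp (- \<delta>) * ((q - p) * (1 + v)) \<le> H q - H p"
    using increment_exp_lower_bound[OF less_imp_le[OF pq] dH dU e u1] by (simp only: increment(1))
  have up: "H q - H p \<le> exp c * exp \<delta> * ((q - p) * (1 + v + \<omega>\<^sup>2))"
    using increment_exp_upper_bound[OF less_imp_le[OF pq] dH dU e u \<omega>1] by (simp only: increment(2))
  have "0 < exp c * exp (- \<delta>) * ((q - p) * (1 + v))" using pq v_pos by simp
  then show H_pos: "0 < H q - H p" using low by linarith
  define A where "A = (H q - H p) / (q - p)"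
  have A_pos: "0 < A" using H_pos pq by (simp add: A_def)
  have "exp c * exp (- \<delta>) * (1 + v) \<le> A" "A \<le> exp c * exp \<delta> * (1 + v + \<omega>\<^sup>2)"
    using low up pq by (simp_all add: A_def field_simps)
  moreover have "0 < 1 + v + \<omega>\<^sup>2" using v_pos by (simp add: add_pos_nonneg)
  ultimately have "ln (exp c * exp (- \<delta>) * (1 + v)) \<le> ln A" "ln A \<le> ln (exp c * exp \<delta> * (1 + v + \<omega>\<^sup>2))"
    using v_pos A_pos by (auto intro!: ln_le_cancel_iff[THEN iffD2])
  then have ln_low: "c - \<delta> + ln (1 + v) \<le> ln A" and ln_up: "ln A \<le> c + \<delta> + ln (1 + (v + \<omega>\<^sup>2))"
    using v_pos \<open>0 < 1 + v + \<omega>\<^sup>2\<close> by (simp_all add: ln_mult add.assoc)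
  have "ln (1 + (v + \<omega>\<^sup>2)) \<le> v + \<omega>\<^sup>2" using \<open>0 < 1 + v + \<omega>\<^sup>2\<close> by (intro ln_add_one_self_le_self2) auto
  moreover have "v - 2 * v\<^sup>2 \<le> ln (1 + v)" using v \<omega> by (intro ln_one_plus_ge) linarith
  moreover have "v\<^sup>2 \<le> \<omega>\<^sup>2" using power_mono[OF v abs_ge_zero, of 2] by simp
  ultimately have "\<bar>ln A - c - v\<bar> \<le> \<delta> + 2 * \<omega>\<^sup>2"
    using ln_low ln_up zero_le_power2[of \<omega>] by (intro abs_leI) linarith+
  then show "\<bar>ln ((H q - H p) / (q - p)) - c - (U q - U p) / (q - p)\<bar> \<le> \<delta> + 2 * \<omega>\<^sup>2"
    by (simp add: A_def v_def)
qed

text \<open>For \<open>H' = exp \<Lambda>\<close> the left-hand side is the logarithm of one factor of \<open>Y0\<close>.\<close>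
lemma jump_log_estimate:
  fixes \<phi> \<psi> H \<Lambda> :: "real \<Rightarrow> real"
  assumes d\<phi>: "\<And>y. DERIV \<phi> y :> \<psi> y"
    and \<psi>_Lipschitz: "\<And>y z. \<bar>\<psi> y - \<psi> z\<bar> \<le> B * \<bar>y - z\<bar>"
    and dH: "\<And>y. DERIV H y :> exp (\<Lambda> y)"
    and \<Lambda>_Lipschitz: "\<And>y z. \<bar>(\<Lambda> y - t * \<psi> y) - (\<Lambda> z - t * \<psi> z)\<bar> \<le> K * t\<^sup>2 * \<bar>y - z\<bar>"
    and pq: "p < q" "q - p \<le> 1" and tB: "\<bar>t\<bar> * B \<le> 1/2" and K: "0 \<le> K" and B: "0 \<le> B"
  shows "0 < H q - H p"
    and "\<bar>((\<Lambda> p + \<Lambda> q) / 2 - ln ((H q - H p) / (q - p)))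
           - t * ((\<psi> q + \<psi> p) / 2 - (\<phi> q - \<phi> p) / (q - p))\<bar>
         \<le> (2 * K + 2 * B\<^sup>2) * t\<^sup>2 * (q - p)"
proof -
  define G where "G y = \<Lambda> y - t * \<psi> y" for y
  define U where "U y = t * \<phi> y - t * \<psi> p * y" for y
  define \<delta> where "\<delta> = K * t\<^sup>2 * (q - p)"
  define \<omega> where "\<omega> = \<bar>t\<bar> * B * (q - p)"
  have \<omega>: "\<omega> \<le> 1/2"
    using mult_left_mono[OF pq(2), of "\<bar>t\<bar> * B"] B tB by (simp add: \<omega>_def)
  have G: "\<bar>G y - G p\<bar> \<le> \<delta>" if "p \<le> y" "y \<le> q" for y
    using \<Lambda>_Lipschitz[of y p] mult_left_mono[of "\<bar>y - p\<bar>" "q - p" "K * t\<^sup>2"] that K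
    by (simp add: G_def \<delta>_def)
  have u: "\<bar>t * \<psi> y - t * \<psi> p\<bar> \<le> \<omega>" if "p \<le> y" "y \<le> q" for y
  proof -
    have "\<bar>t * \<psi> y - t * \<psi> p\<bar> = \<bar>t\<bar> * \<bar>\<psi> y - \<psi> p\<bar>" by (simp add: abs_mult[symmetric] right_diff_distrib)
    also have "\<dots> \<le> \<bar>t\<bar> * (B * (q - p))"
      using \<psi>_Lipschitz[of y p] mult_left_mono[of "\<bar>y - p\<bar>" "q - p" B] that B
      by (intro mult_left_mono) auto
    finally show ?thesis by (simp add: \<omega>_def mult.assoc)
  qed
  have dU: "DERIV U y :> t * \<psi> y - t * \<psi> p" for y
    unfolding U_def by (auto intro!: derivative_eq_intros d\<phi>)
  have dH': "DERIV H y :> exp (\<Lambda> p + (G y - G p) + (t * \<psi> y - t * \<psi> p))"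
    if "p \<le> y" "y \<le> q" for y
    using dH[of y] by (simp add: G_def)
  show "0 < H q - H p"
    by (rule ln_mean_exp_estimate(1)[OF pq(1) dH' dU G u \<omega>])
  have est: "\<bar>ln ((H q - H p) / (q - p)) - \<Lambda> p - (U q - U p) / (q - p)\<bar> \<le> \<delta> + 2 * \<omega>\<^sup>2"
    by (rule ln_mean_exp_estimate(2)[OF pq(1) dH' dU G u \<omega>])
  have "((\<Lambda> p + \<Lambda> q) / 2 - ln ((H q - H p) / (q - p))) - t * ((\<psi> q + \<psi> p) / 2 - (\<phi> q - \<phi> p) / (q - p))
      = (G q - G p) / 2 - (ln ((H q - H p) / (q - p)) - \<Lambda> p - (U q - U p) / (q - p))"
    using pq by (simp add: G_def U_def field_simps)
  also have "\<bar>\<dots>\<bar> \<le> \<delta> / 2 + (\<delta> + 2 * \<omega>\<^sup>2)"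
  proof -
    have "\<bar>x / 2 - y\<bar> \<le> \<delta> / 2 + (\<delta> + 2 * \<omega>\<^sup>2)"
      if "\<bar>x\<bar> \<le> \<delta>" "\<bar>y\<bar> \<le> \<delta> + 2 * \<omega>\<^sup>2" for x y :: real
      using that by arith
    then show ?thesis using G[OF less_imp_le[OF pq(1)] order_refl] est by blast
  qed
  also have "\<dots> \<le> (2 * K + 2 * B\<^sup>2) * t\<^sup>2 * (q - p)"
  proof -
    have "\<omega>\<^sup>2 = t\<^sup>2 * B\<^sup>2 * (q - p) * (q - p)" by (simp add: \<omega>_def power2_eq_square)
    also have "\<dots> \<le> t\<^sup>2 * B\<^sup>2 * (q - p) * 1" using pq by (intro mult_left_mono) auto
    finally have "\<omega>\<^sup>2 \<le> t\<^sup>2 * B\<^sup>2 * (q - p)" by simp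
    moreover have "0 \<le> \<delta>" using K pq by (simp add: \<delta>_def)
    moreover have "(2 * K + 2 * B\<^sup>2) * t\<^sup>2 * (q - p) = 2 * \<delta> + 2 * (t\<^sup>2 * B\<^sup>2 * (q - p))"
      by (simp add: \<delta>_def algebra_simps)
    ultimately show ?thesis by linarith
  qed
  finally show "\<bar>((\<Lambda> p + \<Lambda> q) / 2 - ln ((H q - H p) / (q - p)))
           - t * ((\<psi> q + \<psi> p) / 2 - (\<phi> q - \<phi> p) / (q - p))\<bar>
         \<le> (2 * K + 2 * B\<^sup>2) * t\<^sup>2 * (q - p)" .
qed

section \<open>Derivative of \<open>Y\<^sup>\<beta>\<close> along a family of maps\<close>

lemma DERIV_of_quadratic_error:
  fixes \<Phi> :: "real \<Rightarrow> real"
  assumes e: "0 < e" and bd: "\<And>t. \<bar>t\<bar> < e \<Longrightarrow> \<bar>\<Phi> t - t * V\<bar> \<le> C * t\<^sup>2"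
  shows "\<Phi> 0 = 0" and "DERIV \<Phi> 0 :> V"
proof -
  show \<Phi>0: "\<Phi> 0 = 0" using bd[of 0] e by simp
  have "((\<lambda>y. (\<Phi> y - \<Phi> 0) / (y - 0) - V) \<longlongrightarrow> 0) (at 0)"
  proof (rule Lim_null_comparison)
    show "\<forall>\<^sub>F y in at 0. norm ((\<Phi> y - \<Phi> 0) / (y - 0) - V) \<le> \<bar>C\<bar> * \<bar>y\<bar>"
      unfolding eventually_at
    proof (intro exI[of _ e] conjI allI impI ballI)
      fix y :: real assume y: "y \<noteq> 0 \<and> dist y 0 < e"
      have "norm ((\<Phi> y - \<Phi> 0) / (y - 0) - V) = \<bar>\<Phi> y - y * V\<bar> / \<bar>y\<bar>"
        using y \<Phi>0 by (simp add: field_simps abs_divide)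
      also have "\<dots> \<le> (C * y\<^sup>2) / \<bar>y\<bar>" using y bd[of y] by (intro divide_right_mono) auto
      also have "\<dots> = C * \<bar>y\<bar>" using y by (cases "0 < y") (auto simp: power2_eq_square field_simps)
      also have "\<dots> \<le> \<bar>C\<bar> * \<bar>y\<bar>" by (intro mult_right_mono) auto
      finally show "norm ((\<Phi> y - \<Phi> 0) / (y - 0) - V) \<le> \<bar>C\<bar> * \<bar>y\<bar>" .
    qed (use e in auto)
    show "((\<lambda>y. \<bar>C\<bar> * \<bar>y\<bar>) \<longlongrightarrow> 0) (at 0)"
      using tendsto_intros(1-) by (auto intro!: tendsto_eq_intros)
  qed
  then show "DERIV \<Phi> 0 :> V" unfolding has_field_derivative_iff by (simp add: LIM_zero_iff)
qed

lemma infprod_on_exp_has_sum: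
  assumes "(f has_sum S) A" and "\<And>a. a \<in> A \<Longrightarrow> P a = exp (f a)"
  shows "infprod_on P A = exp S"
proof -
  have "((\<lambda>F. exp (sum f F)) \<longlongrightarrow> exp S) (finite_subsets_at_top A)"
    using assms(1) unfolding has_sum_def by (rule tendsto_exp)
  moreover have "\<forall>\<^sub>F F in finite_subsets_at_top A. exp (sum f F) = prod P F"
  proof (rule eventually_finite_subsets_at_top_weakI)
    fix F assume F: "finite F" "F \<subseteq> A"
    then have "prod P F = prod (\<lambda>a. exp (f a)) F" using assms(2) by (intro prod.cong) auto
    then show "exp (sum f F) = prod P F" by (simp add: exp_sum F(1))
  qed
  ultimately have "((\<lambda>F. prod P F) \<longlongrightarrow> exp S) (finite_subsets_at_top A)"
    using tendsto_cong by fastforce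
  then show ?thesis unfolding infprod_on_def by (rule tendsto_Lim[OF finite_subsets_at_top_neq_bot])
qed


lemma Lipschitz_continuous_on_UNIV:
  fixes f :: "real \<Rightarrow> real"
  assumes "\<And>y z. \<bar>f y - f z\<bar> \<le> M * \<bar>y - z\<bar>" and "0 \<le> M"
  shows "continuous_on UNIV f"
  by (rule lipschitz_on_continuous_on[of M])
    (rule lipschitz_onI, use assms in \<open>auto simp: dist_real_def\<close>)

lemma sqrt_exp_mult: "sqrt (exp a * exp b) = exp ((a + b) / 2)"
  by (rule real_sqrt_unique) (simp_all add: power2_eq_square exp_add[symmetric])

definition Y0_factor :: "(real \<Rightarrow> real) \<Rightarrow> (real \<Rightarrow> real) \<Rightarrow> real \<Rightarrow> real" where
  "Y0_factor h g a = sqrt (deriv h (gminus g a) * deriv h (g a)) / delta_quot h g a"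

lemma Y0_eq_infprod_on: "Y0 h g = infprod_on (Y0_factor h g) (jumps g)"
  by (simp add: Y0_def Y0_factor_def[abs_def])

text \<open>Both \<open>flow \<phi>\<close> and \<open>lin_map \<phi>\<close> are instances, with \<open>L t = ln (h t)'\<close>.\<close>
locale log_deriv_expansion =
  fixes \<phi> :: "real \<Rightarrow> real" and h L :: "real \<Rightarrow> real \<Rightarrow> real" and \<epsilon> K B B0 :: real
  assumes DERIV_\<phi>: "\<And>y. DERIV \<phi> y :> deriv \<phi> y"
    and deriv_Lipschitz: "\<And>y z. \<bar>deriv \<phi> y - deriv \<phi> z\<bar> \<le> B * \<bar>y - z\<bar>"
    and deriv_bounded: "\<And>y. \<bar>deriv \<phi> y\<bar> \<le> B0"
    and \<epsilon>_pos: "0 < \<epsilon>" and K_nonneg: "0 \<le> K" and B_nonneg: "0 \<le> B"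
    and DERIV_h: "\<And>t y. \<bar>t\<bar> < \<epsilon> \<Longrightarrow> DERIV (h t) y :> exp (L t y)"
    and L_expansion: "\<And>t y. \<bar>t\<bar> < \<epsilon> \<Longrightarrow> \<bar>L t y - t * deriv \<phi> y\<bar> \<le> K * t\<^sup>2"
    and L_expansion_Lipschitz: "\<And>t y z. \<bar>t\<bar> < \<epsilon> \<Longrightarrow>
          \<bar>(L t y - t * deriv \<phi> y) - (L t z - t * deriv \<phi> z)\<bar> \<le> K * t\<^sup>2 * \<bar>y - z\<bar>"
begin

definition radius :: real where "radius = min \<epsilon> (1 / (2 * (B + 1)))"

lemma radius_pos: "0 < radius"
  using \<epsilon>_pos B_nonneg by (simp add: radius_def)

lemma less_radius_imp_less_\<epsilon>: "\<bar>t\<bar> < radius \<Longrightarrow> \<bar>t\<bar> < \<epsilon>"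
  by (simp add: radius_def)

lemma less_radius_imp_small: "\<bar>t\<bar> < radius \<Longrightarrow> \<bar>t\<bar> * B \<le> 1/2"
proof -
  assume "\<bar>t\<bar> < radius"
  then have "\<bar>t\<bar> * B \<le> 1 / (2 * (B + 1)) * B"
    using B_nonneg by (intro mult_right_mono) (auto simp: radius_def)
  also have "\<dots> \<le> 1/2" using B_nonneg by (simp add: field_simps)
  finally show ?thesis .
qed

lemma deriv_h: "\<bar>t\<bar> < \<epsilon> \<Longrightarrow> deriv (h t) y = exp (L t y)"
  using DERIV_h DERIV_imp_deriv by blast

lemma Y0_factor_estimate:
  assumes g: "in_G g" and a: "a \<in> jumps g" and t: "\<bar>t\<bar> < radius"
  shows "0 < Y0_factor (h t) g a"
    and "\<bar>ln (Y0_factor (h t) g a) - t * V0_term \<phi> g a\<bar>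
           \<le> (2 * K + 2 * B\<^sup>2) * t\<^sup>2 * (g a - gminus g a)"
proof -
  have t\<epsilon>: "\<bar>t\<bar> < \<epsilon>" by (rule less_radius_imp_less_\<epsilon>[OF t])
  have jump: "gminus g a < g a" "g a - gminus g a \<le> 1"
    using gminus_less_jump[OF g a] jump_size_le_1[OF g, of a] by auto
  note est = jump_log_estimate[OF DERIV_\<phi> deriv_Lipschitz DERIV_h[OF t\<epsilon>]
      L_expansion_Lipschitz[OF t\<epsilon>] jump less_radius_imp_small[OF t] K_nonneg B_nonneg]
  let ?mean = "(h t (g a) - h t (gminus g a)) / (g a - gminus g a)"
  have mean_pos: "0 < ?mean" using est(1) jump by simp
  have factor: "Y0_factor (h t) g a = exp ((L t (gminus g a) + L t (g a)) / 2) / ?mean"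
    by (simp only: Y0_factor_def delta_quot_def deriv_h[OF t\<epsilon>] sqrt_exp_mult)
  show "0 < Y0_factor (h t) g a" unfolding factor by (rule divide_pos_pos[OF exp_gt_zero mean_pos])
  show "\<bar>ln (Y0_factor (h t) g a) - t * V0_term \<phi> g a\<bar>
      \<le> (2 * K + 2 * B\<^sup>2) * t\<^sup>2 * (g a - gminus g a)"
    unfolding factor ln_divide_pos[OF exp_gt_zero mean_pos] ln_exp V0_term_def by (rule est(2))
qed

lemma ln_Y0_expansion:
  assumes g: "in_G g" and summable: "(\<lambda>a. \<bar>V0_term \<phi> g a\<bar>) summable_on jumps g"
    and t: "\<bar>t\<bar> < radius"
  shows "0 < Y0 (h t) g" and "\<bar>ln (Y0 (h t) g) - t * V0 \<phi> g\<bar> \<le> (2 * K + 2 * B\<^sup>2) * t\<^sup>2"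
proof -
  define C where "C = 2 * K + 2 * B\<^sup>2"
  define e where "e a = ln (Y0_factor (h t) g a) - t * V0_term \<phi> g a" for a
  have e_le: "norm (e a) \<le> C * t\<^sup>2 * (g a - gminus g a)" if "a \<in> jumps g" for a
    using Y0_factor_estimate(2)[OF g that t] by (simp add: e_def C_def)
  have sizes: "(\<lambda>a. C * t\<^sup>2 * (g a - gminus g a)) summable_on jumps g"
    by (intro summable_on_cmult_right jump_sizes_summable(1)[OF g])
  have e_abs: "(\<lambda>a. norm (e a)) summable_on jumps g"
    by (rule Infinite_Sum.abs_summable_on_comparison_test'[OF sizes e_le])
  then have e_sum: "e summable_on jumps g"
    by (rule summable_on_iff_abs_summable_on_real[THEN iffD2])
  have V0_sum: "V0_term \<phi> g summable_on jumps g"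
    using summable_on_iff_abs_summable_on_real[of "V0_term \<phi> g" "jumps g"] summable by simp
  have "((\<lambda>a. t * V0_term \<phi> g a + e a) has_sum (t * V0 \<phi> g + (\<Sum>\<^sub>\<infinity>a\<in>jumps g. e a))) (jumps g)"
    unfolding V0_def by (intro has_sum_add has_sum_cmult_right has_sum_infsum V0_sum e_sum)
  then have ln_sum: "((\<lambda>a. ln (Y0_factor (h t) g a)) has_sum
      (t * V0 \<phi> g + (\<Sum>\<^sub>\<infinity>a\<in>jumps g. e a))) (jumps g)"
    by (simp add: e_def)
  have Y0: "Y0 (h t) g = exp (t * V0 \<phi> g + (\<Sum>\<^sub>\<infinity>a\<in>jumps g. e a))"
    unfolding Y0_eq_infprod_on
    by (rule infprod_on_exp_has_sum[OF ln_sum]) (simp add: Y0_factor_estimate(1)[OF g _ t])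
  show "0 < Y0 (h t) g" by (simp add: Y0)
  have "\<bar>\<Sum>\<^sub>\<infinity>a\<in>jumps g. e a\<bar> \<le> (\<Sum>\<^sub>\<infinity>a\<in>jumps g. norm (e a))"
    using norm_infsum_bound[of e "jumps g"] e_abs by simp
  also have "\<dots> \<le> (\<Sum>\<^sub>\<infinity>a\<in>jumps g. C * t\<^sup>2 * (g a - gminus g a))"
    by (rule infsum_mono[OF e_abs sizes e_le])
  also have "\<dots> = C * t\<^sup>2 * (\<Sum>\<^sub>\<infinity>a\<in>jumps g. g a - gminus g a)"
    by (rule infsum_cmult_right')
  also have "\<dots> \<le> C * t\<^sup>2"
    using jump_sizes_summable(2)[OF g] K_nonneg by (intro mult_left_le) (auto simp: C_def)
  finally show "\<bar>ln (Y0 (h t) g) - t * V0 \<phi> g\<bar> \<le> (2 * K + 2 * B\<^sup>2) * t\<^sup>2"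
    by (simp add: Y0 C_def)
qed

lemma integral_L_expansion:
  assumes g: "in_G g" and t: "\<bar>t\<bar> < \<epsilon>"
  shows "\<bar>integral {0..1} (\<lambda>s. L t (g s)) - t * integral {0..1} (\<lambda>s. deriv \<phi> (g s))\<bar> \<le> K * t\<^sup>2"
proof -
  have deriv_cont: "continuous_on UNIV (deriv \<phi>)"
    by (rule Lipschitz_continuous_on_UNIV[OF deriv_Lipschitz B_nonneg])
  have L_Lipschitz: "\<bar>L t y - L t z\<bar> \<le> (K * t\<^sup>2 + \<bar>t\<bar> * B) * \<bar>y - z\<bar>" for y z
  proof -
    have "\<bar>L t y - L t z\<bar> \<le> \<bar>(L t y - t * deriv \<phi> y) - (L t z - t * deriv \<phi> z)\<bar> + \<bar>t\<bar> * \<bar>deriv \<phi> y - deriv \<phi> z\<bar>"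
      by (simp add: abs_mult[symmetric] right_diff_distrib)
    also have "\<dots> \<le> K * t\<^sup>2 * \<bar>y - z\<bar> + \<bar>t\<bar> * (B * \<bar>y - z\<bar>)"
      by (intro add_mono mult_left_mono L_expansion_Lipschitz[OF t] deriv_Lipschitz) auto
    finally show ?thesis by (simp add: algebra_simps)
  qed
  have L_bounded: "\<bar>L t y\<bar> \<le> K * t\<^sup>2 + \<bar>t\<bar> * B0" for y
  proof -
    have "\<bar>L t y\<bar> \<le> \<bar>L t y - t * deriv \<phi> y\<bar> + \<bar>t\<bar> * \<bar>deriv \<phi> y\<bar>" by (simp add: abs_mult[symmetric])
    also have "\<dots> \<le> K * t\<^sup>2 + \<bar>t\<bar> * B0"
      by (intro add_mono mult_left_mono L_expansion[OF t] deriv_bounded) auto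
    finally show ?thesis .
  qed
  have L_int: "(\<lambda>s. L t (g s)) integrable_on {0..1}"
    by (rule integrable_comp_mono[OF Lipschitz_continuous_on_UNIV[OF L_Lipschitz] in_G_mono[OF g] L_bounded])
      (use K_nonneg B_nonneg in simp)
  have deriv_int: "(\<lambda>s. t * deriv \<phi> (g s)) integrable_on {0..1}"
    using integrable_cmul[OF integrable_comp_mono[OF deriv_cont in_G_mono[OF g] deriv_bounded], of t 0 1]
    by simp
  have "integral {0..1} (\<lambda>s. L t (g s)) - t * integral {0..1} (\<lambda>s. deriv \<phi> (g s))
      = integral {0..1} (\<lambda>s. L t (g s) - t * deriv \<phi> (g s))"
    using Henstock_Kurzweil_Integration.integral_diff[OF L_int deriv_int] by simp
  also have "norm \<dots> \<le> integral {0..1} (\<lambda>s::real. K * t\<^sup>2)"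
    by (rule Henstock_Kurzweil_Integration.integral_norm_bound_integral[OF integrable_diff[OF L_int deriv_int]])
      (use L_expansion[OF t] in auto)
  finally show ?thesis by (simp only: integral_01_const real_norm_def)
qed

theorem DERIV_Ybeta:
  assumes g: "in_G g" and summable: "(\<lambda>a. \<bar>V0_term \<phi> g a\<bar>) summable_on jumps g"
  shows "DERIV (\<lambda>t. Ybeta \<beta> (h t) g) 0 :> Vbeta \<beta> \<phi> g"
proof -
  define \<Phi> where "\<Phi> t = \<beta> * integral {0..1} (\<lambda>s. L t (g s)) + ln (Y0 (h t) g)" for t
  have Ybeta_eq: "Ybeta \<beta> (h t) g = exp (\<Phi> t)" if "\<bar>t\<bar> < radius" for t
  proof -
    have "Ybeta \<beta> (h t) g = exp (\<beta> * integral {0..1} (\<lambda>s. L t (g s))) * exp (ln (Y0 (h t) g))"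
      unfolding Ybeta_def Xbeta_def deriv_h[OF less_radius_imp_less_\<epsilon>[OF that]] ln_exp
        exp_ln[OF ln_Y0_expansion(1)[OF g summable that]] by (rule refl)
    then show ?thesis by (simp only: \<Phi>_def exp_add)
  qed
  have "\<bar>\<Phi> t - t * Vbeta \<beta> \<phi> g\<bar> \<le> (\<bar>\<beta>\<bar> * K + (2 * K + 2 * B\<^sup>2)) * t\<^sup>2" if t: "\<bar>t\<bar> < radius" for t
  proof -
    have "\<bar>\<Phi> t - t * Vbeta \<beta> \<phi> g\<bar>
        = \<bar>\<beta> * (integral {0..1} (\<lambda>s. L t (g s)) - t * integral {0..1} (\<lambda>s. deriv \<phi> (g s)))
          + (ln (Y0 (h t) g) - t * V0 \<phi> g)\<bar>"
    proof -
      have ring: "\<beta> * x + y - t * (v + \<beta> * z) = \<beta> * (x - t * z) + (y - t * v)" for x y v z :: real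
        by (simp add: algebra_simps)
      show ?thesis unfolding \<Phi>_def Vbeta_def ring by (rule refl)
    qed
    also have "\<dots> \<le> \<bar>\<beta>\<bar> * \<bar>integral {0..1} (\<lambda>s. L t (g s)) - t * integral {0..1} (\<lambda>s. deriv \<phi> (g s))\<bar>
          + \<bar>ln (Y0 (h t) g) - t * V0 \<phi> g\<bar>"
      by (simp add: abs_mult[symmetric] abs_triangle_ineq)
    also have "\<dots> \<le> \<bar>\<beta>\<bar> * (K * t\<^sup>2) + (2 * K + 2 * B\<^sup>2) * t\<^sup>2"
      by (intro add_mono mult_left_mono ln_Y0_expansion(2)[OF g summable t]
          integral_L_expansion[OF g less_radius_imp_less_\<epsilon>[OF t]]) auto
    finally show ?thesis by (simp add: algebra_simps)
  qed
  note \<Phi> = DERIV_of_quadratic_error[OF radius_pos this]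
  have "DERIV (\<lambda>t. exp (\<Phi> t)) 0 :> Vbeta \<beta> \<phi> g"
    using DERIV_chain2[OF DERIV_exp \<Phi>(2)] \<Phi>(1) by simp
  moreover have "\<forall>\<^sub>F t in nhds 0. Ybeta \<beta> (h t) g = exp (\<Phi> t)"
    unfolding eventually_nhds_metric using radius_pos Ybeta_eq by (auto simp: dist_real_def)
  ultimately show ?thesis by (simp only: DERIV_cong_ev)
qed

end


section \<open>The flow of \<open>\<phi>\<close>\<close>

lemma Gronwall_zero_forward:
  fixes f f' :: "real \<Rightarrow> real"
  assumes df: "\<And>s. DERIV f s :> f' s" and bound: "\<And>s. f' s \<le> c * f s"
    and zero: "f s0 = 0" and "s0 \<le> s"
  shows "f s \<le> 0"
proof -
  define k where "k r = f r * exp (- c * (r - s0))" for r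
  have "k s \<le> k s0"
    using \<open>s0 \<le> s\<close>
  proof (rule DERIV_nonpos_imp_nonincreasing)
    fix r
    have "DERIV k r :> (f' r - c * f r) * exp (- c * (r - s0))"
      unfolding k_def by (auto intro!: derivative_eq_intros df simp: algebra_simps)
    moreover have "(f' r - c * f r) * exp (- c * (r - s0)) \<le> 0"
      using bound[of r] by (simp add: mult_nonpos_nonneg)
    ultimately show "\<exists>y. DERIV k r :> y \<and> y \<le> 0" by blast
  qed
  then have "f s * exp (- c * (s - s0)) \<le> 0" using zero by (simp add: k_def)
  then show ?thesis by (simp add: mult_le_0_iff)
qed

lemma Gronwall_zero:
  fixes f f' :: "real \<Rightarrow> real"
  assumes df: "\<And>s. DERIV f s :> f' s" and bound: "\<And>s. \<bar>f' s\<bar> \<le> c * f s" and zero: "f s0 = 0"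
  shows "f s \<le> 0"
proof (cases "s0 \<le> s")
  case True
  show ?thesis
    by (rule Gronwall_zero_forward[OF df _ zero True]) (use bound abs_le_D1 order_trans in blast)
next
  case False
  have "DERIV (\<lambda>r. f (- r)) r :> - f' (- r)" for r
    using DERIV_chain2[OF df DERIV_minus[OF DERIV_ident]] by simp
  moreover have "- f' (- r) \<le> c * f (- r)" for r using bound[of "- r"] by simp
  ultimately have "f (- (- s)) \<le> 0"
    by (rule Gronwall_zero_forward[of _ _ c "- s0"]) (use zero False in auto)
  then show ?thesis by simp
qed

lemma ode_solution_unique:
  fixes \<phi> u v :: "real \<Rightarrow> real"
  assumes Lipschitz: "\<And>a b. \<bar>\<phi> a - \<phi> b\<bar> \<le> L * \<bar>a - b\<bar>"
    and du: "\<And>s. DERIV u s :> \<phi> (u s)" and dv: "\<And>s. DERIV v s :> \<phi> (v s)"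
    and "u s0 = v s0"
  shows "u s = v s"
proof -
  define f where "f s = (u s - v s)\<^sup>2" for s
  have df: "DERIV f s :> 2 * (u s - v s) * (\<phi> (u s) - \<phi> (v s))" for s
    unfolding f_def by (auto intro!: derivative_eq_intros du dv simp: power2_eq_square algebra_simps)
  have "\<bar>2 * (u s - v s) * (\<phi> (u s) - \<phi> (v s))\<bar> \<le> 2 * L * f s" for s
  proof -
    have "\<bar>2 * (u s - v s) * (\<phi> (u s) - \<phi> (v s))\<bar> = 2 * \<bar>u s - v s\<bar> * \<bar>\<phi> (u s) - \<phi> (v s)\<bar>"
      unfolding abs_mult by simp
    also have "\<dots> \<le> 2 * \<bar>u s - v s\<bar> * (L * \<bar>u s - v s\<bar>)" by (intro mult_left_mono Lipschitz) auto
    also have "\<dots> = 2 * L * f s" by (simp add: f_def power2_eq_square abs_mult_self algebra_simps)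
    finally show ?thesis .
  qed
  moreover have "f s0 = 0" by (simp add: f_def \<open>u s0 = v s0\<close>)
  ultimately have "f s \<le> 0" by (rule Gronwall_zero[OF df])
  then show ?thesis by (simp add: f_def)
qed

lemma DERIV_abs_increment_le_exp:
  fixes D D' :: "real \<Rightarrow> real"
  assumes dD: "\<And>r. DERIV D r :> D' r" and bound: "\<And>r. \<bar>D' r\<bar> \<le> c * exp (k * \<bar>r\<bar>)"
    and k: "0 < k"
  shows "\<bar>D s - D 0\<bar> \<le> c / k * exp (k * \<bar>s\<bar>)"
proof -
  have "0 \<le> c" using bound[of 0] abs_ge_zero[of "D' 0"] by simp
  then have ck: "0 \<le> c / k" using k by simp
  show ?thesis
  proof (cases "0 \<le> s")
    case True
    have "\<bar>D s - D 0\<bar> \<le> c / k * exp (k * s) - c / k * exp (k * 0)"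
    proof (rule DERIV_abs_le_increment[OF True dD])
      fix r :: real assume "0 \<le> r"
      show "DERIV (\<lambda>r. c / k * exp (k * r)) r :> c * exp (k * r)"
        using k by (auto intro!: derivative_eq_intros)
      show "\<bar>D' r\<bar> \<le> c * exp (k * r)" using bound[of r] \<open>0 \<le> r\<close> by simp
    qed
    then show ?thesis using True ck by simp
  next
    case False
    have "\<bar>D 0 - D s\<bar> \<le> - c / k * exp (- k * 0) - - c / k * exp (- k * s)"
    proof (rule DERIV_abs_le_increment[OF _ dD])
      fix r :: real assume "r \<le> 0"
      show "DERIV (\<lambda>r. - c / k * exp (- k * r)) r :> c * exp (- k * r)"
        using k by (auto intro!: derivative_eq_intros)
      show "\<bar>D' r\<bar> \<le> c * exp (- k * r)" using bound[of r] \<open>r \<le> 0\<close> by simp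
    qed (use False in simp)
    then show ?thesis using False ck by (simp add: abs_minus_commute)
  qed
qed

text \<open>Existence for \<open>x' = \<phi> x\<close> with \<open>\<phi>\<close> bounded and Lipschitz, by the Banach fixed point theorem
  for the Picard map, written for \<open>w = (x - x0) / weight\<close> in the space of bounded continuous
  functions, where the weight \<open>exp (2 L \<bar>s\<bar>)\<close> makes the map a contraction with constant \<open>1/2\<close>.\<close>
locale bounded_Lipschitz_field =
  fixes \<phi> :: "real \<Rightarrow> real" and L M :: real
  assumes Lipschitz: "\<And>a b. \<bar>\<phi> a - \<phi> b\<bar> \<le> L * \<bar>a - b\<bar>"
    and L_pos: "0 < L" and bounded: "\<And>y. \<bar>\<phi> y\<bar> \<le> M"
begin

definition weight :: "real \<Rightarrow> real" where "weight r = exp (2 * L * \<bar>r\<bar>)"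

definition picard_integrand :: "real \<Rightarrow> (real \<Rightarrow>\<^sub>C real) \<Rightarrow> real \<Rightarrow> real" where
  "picard_integrand x w r = \<phi> (x + apply_bcontfun w r * weight r)"

definition picard :: "real \<Rightarrow> (real \<Rightarrow>\<^sub>C real) \<Rightarrow> real \<Rightarrow> real" where
  "picard x w s = (antideriv (picard_integrand x w) s - antideriv (picard_integrand x w) 0) / weight s"

lemma weight_ge_1: "1 \<le> weight r"
  using L_pos by (simp add: weight_def)

lemma DERIV_antideriv_picard_integrand:
  "DERIV (antideriv (picard_integrand x w)) r :> picard_integrand x w r"
proof (rule DERIV_antideriv)
  have "continuous_on UNIV \<phi>"
    by (rule Lipschitz_continuous_on_UNIV[OF Lipschitz]) (use L_pos in simp)
  moreover have "continuous_on UNIV (\<lambda>r. x + apply_bcontfun w r * weight r)"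
    unfolding weight_def by (intro continuous_intros continuous_on_apply_bcontfun)
  ultimately show "continuous_on UNIV (picard_integrand x w)"
    unfolding picard_integrand_def[abs_def] by (rule continuous_on_compose2) simp
qed

lemma picard_bcontfun: "picard x w \<in> bcontfun"
proof (rule bcontfun_normI)
  have "continuous_on UNIV (antideriv (picard_integrand x w))"
    by (rule DERIV_continuous_on_UNIV[OF DERIV_antideriv_picard_integrand])
  moreover have "weight s \<noteq> 0" for s using weight_ge_1[of s] by auto
  ultimately show "continuous_on UNIV (picard x w)"
    unfolding picard_def[abs_def] weight_def by (intro continuous_intros) auto
  show "norm (picard x w s) \<le> M / (2 * L)" for s
  proof -
    have "\<bar>antideriv (picard_integrand x w) s - antideriv (picard_integrand x w) 0\<bar> \<le> M * \<bar>s - 0\<bar>"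
      by (rule DERIV_bounded_Lipschitz[OF DERIV_antideriv_picard_integrand])
        (simp add: picard_integrand_def bounded)
    also have "M * \<bar>s - 0\<bar> \<le> M / (2 * L) * weight s"
    proof -
      have "1 + 2 * L * \<bar>s\<bar> \<le> weight s" unfolding weight_def by (rule exp_ge_add_one_self)
      then have "M * (2 * L * \<bar>s\<bar>) \<le> M * weight s"
        using bounded[of 0] by (intro mult_left_mono) auto
      then show ?thesis using L_pos by (simp add: field_simps)
    qed
    finally show ?thesis using weight_ge_1[of s] by (simp add: picard_def abs_divide divide_le_eq)
  qed
qed

lemma picard_contraction:
  "dist (Bcontfun (picard x w1)) (Bcontfun (picard x w2)) \<le> 1/2 * dist w1 w2"
proof (rule dist_bound)
  fix s
  define D where "D r = antideriv (picard_integrand x w1) r - antideriv (picard_integrand x w2) r" for r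
  have dD: "DERIV D r :> picard_integrand x w1 r - picard_integrand x w2 r" for r
    unfolding D_def by (intro DERIV_diff DERIV_antideriv_picard_integrand)
  have "\<bar>picard_integrand x w1 r - picard_integrand x w2 r\<bar> \<le> L * dist w1 w2 * exp (2 * L * \<bar>r\<bar>)" for r
  proof -
    have "\<bar>picard_integrand x w1 r - picard_integrand x w2 r\<bar>
        \<le> L * (\<bar>apply_bcontfun w1 r - apply_bcontfun w2 r\<bar> * weight r)"
      using Lipschitz[of "x + apply_bcontfun w1 r * weight r" "x + apply_bcontfun w2 r * weight r"]
        weight_ge_1[of r]
      by (simp add: picard_integrand_def left_diff_distrib[symmetric] abs_mult)
    also have "\<dots> \<le> L * (dist w1 w2 * weight r)"
      using dist_bounded[of w1 r w2] weight_ge_1[of r] L_pos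
      by (intro mult_left_mono mult_right_mono) (auto simp: dist_real_def)
    finally show ?thesis by (simp add: weight_def mult.assoc)
  qed
  then have "\<bar>D s - D 0\<bar> \<le> L * dist w1 w2 / (2 * L) * exp (2 * L * \<bar>s\<bar>)"
    by (intro DERIV_abs_increment_le_exp[OF dD]) (use L_pos in auto)
  then have "\<bar>D s - D 0\<bar> \<le> dist w1 w2 / 2 * weight s" using L_pos by (simp add: weight_def)
  moreover have "picard x w1 s - picard x w2 s = (D s - D 0) / weight s"
    by (simp add: picard_def D_def diff_divide_distrib)
  ultimately have "\<bar>picard x w1 s - picard x w2 s\<bar> \<le> dist w1 w2 / 2"
    using weight_ge_1[of s] by (simp add: abs_divide divide_le_eq)
  then show "dist (apply_bcontfun (Bcontfun (picard x w1)) s) (apply_bcontfun (Bcontfun (picard x w2)) s)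
      \<le> 1/2 * dist w1 w2"
    by (simp add: Bcontfun_inverse[OF picard_bcontfun] dist_real_def)
qed

lemma ode_solution_exists: "\<exists>u. u 0 = x \<and> (\<forall>s. DERIV u s :> \<phi> (u s))"
proof -
  obtain w where w: "Bcontfun (picard x w) = w"
    using banach_fix_type[of "1/2" "\<lambda>w. Bcontfun (picard x w)"] picard_contraction by auto
  then have w_eq: "apply_bcontfun w s = picard x w s" for s
    using Bcontfun_inverse[OF picard_bcontfun] by metis
  define u where "u s = x + (antideriv (picard_integrand x w) s - antideriv (picard_integrand x w) 0)" for s
  have "DERIV u s :> \<phi> (u s)" for s
  proof -
    have "DERIV u s :> picard_integrand x w s"
      unfolding u_def by (auto intro!: derivative_eq_intros DERIV_antideriv_picard_integrand)
    moreover have "x + apply_bcontfun w s * weight s = u s"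
      using w_eq[of s] weight_ge_1[of s] by (simp add: picard_def u_def)
    ultimately show ?thesis by (simp add: picard_integrand_def)
  qed
  moreover have "u 0 = x" by (simp add: u_def)
  ultimately show ?thesis by blast
qed

end


lemma abs_exp_minus_one_le: "\<bar>exp a - 1\<bar> \<le> \<bar>a\<bar> * exp \<bar>a\<bar>" for a :: real
proof -
  have "\<bar>exp a - exp 0\<bar> \<le> exp \<bar>a\<bar> * \<bar>a\<bar>"
    by (rule DERIV_abs_diff_0_le[OF DERIV_exp]) (simp add: abs_le_iff)
  then show ?thesis by (simp add: mult.commute)
qed

lemma abs_divided_difference_minus_deriv_le:
  fixes \<phi> \<psi> :: "real \<Rightarrow> real"
  assumes d: "\<And>y. DERIV \<phi> y :> \<psi> y" and L: "\<And>y z. \<bar>\<psi> y - \<psi> z\<bar> \<le> B * \<bar>y - z\<bar>"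
    and ab: "a \<noteq> b" and B: "0 \<le> B"
  shows "\<bar>(\<phi> a - \<phi> b) / (a - b) - \<psi> a\<bar> \<le> B * \<bar>a - b\<bar>"
proof -
  obtain \<xi> where \<xi>: "min a b < \<xi>" "\<xi> < max a b" "(\<phi> a - \<phi> b) / (a - b) = \<psi> \<xi>"
  proof (cases "a < b")
    case True
    from MVT2[OF True, of \<phi> \<psi>] d obtain \<xi> where "a < \<xi>" "\<xi> < b" "\<phi> b - \<phi> a = (b - a) * \<psi> \<xi>" by blast
    then show ?thesis using True by (intro that[of \<xi>]) (auto simp: field_simps)
  next
    case False
    then have "b < a" using ab by simp
    from MVT2[OF this, of \<phi> \<psi>] d obtain \<xi> where "b < \<xi>" "\<xi> < a" "\<phi> a - \<phi> b = (a - b) * \<psi> \<xi>" by blast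
    then show ?thesis using \<open>b < a\<close> by (intro that[of \<xi>]) (auto simp: field_simps)
  qed
  have "\<bar>\<psi> \<xi> - \<psi> a\<bar> \<le> B * \<bar>\<xi> - a\<bar>" by (rule L)
  also have "\<dots> \<le> B * \<bar>a - b\<bar>" using \<xi> B by (intro mult_left_mono) auto
  finally show ?thesis using \<xi>(3) by simp
qed

locale C3_bounded_field =
  fixes \<phi> \<psi> \<psi>2 \<psi>3 :: "real \<Rightarrow> real" and M0 B0 B B3 :: real
  assumes d\<phi>: "\<And>y. DERIV \<phi> y :> \<psi> y" and d\<psi>: "\<And>y. DERIV \<psi> y :> \<psi>2 y"
    and d\<psi>2: "\<And>y. DERIV \<psi>2 y :> \<psi>3 y"
    and b\<phi>: "\<And>y. \<bar>\<phi> y\<bar> \<le> M0" and b\<psi>: "\<And>y. \<bar>\<psi> y\<bar> \<le> B0"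
    and b\<psi>2: "\<And>y. \<bar>\<psi>2 y\<bar> \<le> B" and b\<psi>3: "\<And>y. \<bar>\<psi>3 y\<bar> \<le> B3"
begin

lemma bounds_nonneg: "0 \<le> M0" "0 \<le> B0" "0 \<le> B" "0 \<le> B3"
  using b\<phi>[of 0] b\<psi>[of 0] b\<psi>2[of 0] b\<psi>3[of 0] by linarith+

lemma \<phi>_Lipschitz: "\<bar>\<phi> a - \<phi> b\<bar> \<le> B0 * \<bar>a - b\<bar>" by (rule DERIV_bounded_Lipschitz[OF d\<phi> b\<psi>])
lemma \<psi>_Lipschitz: "\<bar>\<psi> a - \<psi> b\<bar> \<le> B * \<bar>a - b\<bar>" by (rule DERIV_bounded_Lipschitz[OF d\<psi> b\<psi>2])
lemma \<psi>2_Lipschitz: "\<bar>\<psi>2 a - \<psi>2 b\<bar> \<le> B3 * \<bar>a - b\<bar>" by (rule DERIV_bounded_Lipschitz[OF d\<psi>2 b\<psi>3])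

lemma continuous_on_\<psi>: "continuous_on UNIV \<psi>" by (rule DERIV_continuous_on_UNIV[OF d\<psi>])

lemma flow_solution_unique:
  assumes "\<And>s. DERIV u s :> \<phi> (u s)" "\<And>s. DERIV v s :> \<phi> (v s)" "u s0 = v s0"
  shows "u s = v s"
  by (rule ode_solution_unique[OF \<phi>_Lipschitz assms])

lemma flow_solution_ex1: "\<exists>!u. u 0 = x \<and> (\<forall>s. DERIV u s :> \<phi> (u s))"
proof (rule ex_ex1I)
  have "bounded_Lipschitz_field \<phi> (B0 + 1) M0"
  proof
    show "\<bar>\<phi> a - \<phi> b\<bar> \<le> (B0 + 1) * \<bar>a - b\<bar>" for a b
      using \<phi>_Lipschitz[of a b] by (simp add: distrib_right)
  qed (use bounds_nonneg b\<phi> in auto)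
  then show "\<exists>u. u 0 = x \<and> (\<forall>s. DERIV u s :> \<phi> (u s))"
    by (rule bounded_Lipschitz_field.ode_solution_exists)
  show "u = v" if "u 0 = x \<and> (\<forall>s. DERIV u s :> \<phi> (u s))"
    and "v 0 = x \<and> (\<forall>s. DERIV v s :> \<phi> (v s))" for u v
    using that flow_solution_unique[of u v 0] by auto
qed

lemma flow_solution: "flow \<phi> 0 x = x" "DERIV (\<lambda>s. flow \<phi> s x) s :> \<phi> (flow \<phi> s x)"
proof -
  define U where "U = (THE u. u 0 = x \<and> (\<forall>s. DERIV u s :> \<phi> (u s)))"
  have U: "U 0 = x \<and> (\<forall>s. DERIV U s :> \<phi> (U s))" unfolding U_def by (rule theI'[OF flow_solution_ex1])
  have "(\<lambda>s. flow \<phi> s x) = U" by (simp add: flow_def U_def fun_eq_iff)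
  then show "flow \<phi> 0 x = x" "DERIV (\<lambda>s. flow \<phi> s x) s :> \<phi> (flow \<phi> s x)" using U by auto
qed

lemma continuous_on_flow: "continuous_on UNIV (\<lambda>s. flow \<phi> s x)"
  by (rule DERIV_continuous_on_UNIV[OF flow_solution(2)])

lemma flow_displacement_le: "\<bar>flow \<phi> s y - y\<bar> \<le> M0 * \<bar>s\<bar>"
  using DERIV_abs_diff_0_le[of "\<lambda>s. flow \<phi> s y" "\<lambda>s. \<phi> (flow \<phi> s y)" s M0] flow_solution b\<phi> by simp

lemma flow_inj: assumes "y \<noteq> z" shows "flow \<phi> s y \<noteq> flow \<phi> s z"
proof
  assume "flow \<phi> s y = flow \<phi> s z"
  then have "flow \<phi> 0 y = flow \<phi> 0 z"
    by (rule flow_solution_unique[of "\<lambda>s. flow \<phi> s y" "\<lambda>s. flow \<phi> s z" s, OF flow_solution(2) flow_solution(2)])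
  then show False using assms by (simp add: flow_solution)
qed

definition flow_quotient :: "real \<Rightarrow> real \<Rightarrow> real \<Rightarrow> real" where
  "flow_quotient y z s = (flow \<phi> s y - flow \<phi> s z) / (y - z)"
definition log_flow_quotient :: "real \<Rightarrow> real \<Rightarrow> real \<Rightarrow> real" where
  "log_flow_quotient y z s = ln (flow_quotient y z s)"

lemma flow_quotient_pos: assumes "y \<noteq> z" shows "0 < flow_quotient y z s"
proof (rule ccontr)
  assume "\<not> 0 < flow_quotient y z s"
  then have le: "flow_quotient y z s \<le> 0" by simp
  have Q0: "flow_quotient y z 0 = 1" using assms by (simp add: flow_quotient_def flow_solution)
  have nz: "flow_quotient y z r \<noteq> 0" for r using flow_inj[OF assms, of r] assms by (simp add: flow_quotient_def)
  have c: "continuous_on A (flow_quotient y z)" for A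
    unfolding flow_quotient_def by (intro continuous_intros continuous_on_subset[OF continuous_on_flow]) (use assms in auto)
  show False
  proof (cases "0 \<le> s")
    case True
    from IVT2'[of "flow_quotient y z" s 0 0, OF le _ True c] Q0 nz show False by auto
  next
    case False
    then have "s \<le> 0" by simp
    from IVT'[of "flow_quotient y z" s 0 0, OF le _ this c] Q0 nz show False by auto
  qed
qed

definition flow_slope :: "real \<Rightarrow> real \<Rightarrow> real \<Rightarrow> real" where
  "flow_slope y z s = (\<phi> (flow \<phi> s y) - \<phi> (flow \<phi> s z)) / (flow \<phi> s y - flow \<phi> s z)"

lemma DERIV_log_flow_quotient: assumes "y \<noteq> z" shows "DERIV (log_flow_quotient y z) s :> flow_slope y z s"
proof -
  have dQ: "DERIV (flow_quotient y z) s :> (\<phi> (flow \<phi> s y) - \<phi> (flow \<phi> s z)) / (y - z)"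
    using assms unfolding flow_quotient_def[abs_def] by (auto intro!: derivative_eq_intros flow_solution)
  have "DERIV (\<lambda>s. ln (flow_quotient y z s)) s :> inverse (flow_quotient y z s) * ((\<phi> (flow \<phi> s y) - \<phi> (flow \<phi> s z)) / (y - z))"
    by (rule DERIV_chain2[OF DERIV_ln[OF flow_quotient_pos[OF assms]] dQ])
  moreover have "inverse (flow_quotient y z s) * ((\<phi> (flow \<phi> s y) - \<phi> (flow \<phi> s z)) / (y - z)) = flow_slope y z s"
  proof -
    have nz1: "y - z \<noteq> 0" using assms by simp
    have nz2: "flow \<phi> s y - flow \<phi> s z \<noteq> 0" using flow_inj[OF assms, of s] by simp
    have "inverse (flow_quotient y z s) = (y - z) / (flow \<phi> s y - flow \<phi> s z)" by (simp add: flow_quotient_def inverse_divide)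
    moreover have "(y - z) / (flow \<phi> s y - flow \<phi> s z) * ((\<phi> (flow \<phi> s y) - \<phi> (flow \<phi> s z)) / (y - z))
        = (\<phi> (flow \<phi> s y) - \<phi> (flow \<phi> s z)) / (flow \<phi> s y - flow \<phi> s z)"
      using nz1 nz2 by (simp add: divide_simps)
    ultimately show ?thesis by (simp add: flow_slope_def)
  qed
  ultimately show ?thesis by (simp add: log_flow_quotient_def[abs_def])
qed

lemma flow_slope_bound: "y \<noteq> z \<Longrightarrow> \<bar>flow_slope y z s\<bar> \<le> B0"
  using \<phi>_Lipschitz[of "flow \<phi> s y" "flow \<phi> s z"] flow_inj[of y z s]
  by (simp add: flow_slope_def abs_divide divide_le_eq)

lemma log_flow_quotient_0: "y \<noteq> z \<Longrightarrow> log_flow_quotient y z 0 = 0" by (simp add: log_flow_quotient_def flow_quotient_def flow_solution)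

lemma abs_log_flow_quotient_le: "y \<noteq> z \<Longrightarrow> \<bar>log_flow_quotient y z s\<bar> \<le> B0 * \<bar>s\<bar>"
  using DERIV_abs_diff_0_le[OF DERIV_log_flow_quotient, of y z s B0] flow_slope_bound log_flow_quotient_0 by auto

lemma flow_Lipschitz: "\<bar>flow \<phi> s y - flow \<phi> s z\<bar> \<le> \<bar>y - z\<bar> * exp (B0 * \<bar>s\<bar>)"
proof (cases "y = z")
  case True then show ?thesis by simp
next
  case False
  have "flow \<phi> s y - flow \<phi> s z = (y - z) * flow_quotient y z s" using False by (simp add: flow_quotient_def)
  also have "flow_quotient y z s = exp (log_flow_quotient y z s)" using flow_quotient_pos[OF False] by (simp add: log_flow_quotient_def)
  finally have "\<bar>flow \<phi> s y - flow \<phi> s z\<bar> = \<bar>y - z\<bar> * exp (log_flow_quotient y z s)" by (simp add: abs_mult)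
  also have "\<dots> \<le> \<bar>y - z\<bar> * exp (B0 * \<bar>s\<bar>)" using abs_log_flow_quotient_le[OF False, of s] by (intro mult_left_mono) auto
  finally show ?thesis .
qed

definition flow_log_deriv :: "real \<Rightarrow> real \<Rightarrow> real" where
  "flow_log_deriv t y = antideriv (\<lambda>s. \<psi> (flow \<phi> s y)) t - antideriv (\<lambda>s. \<psi> (flow \<phi> s y)) 0"

lemma DERIV_flow_log_deriv: "DERIV (\<lambda>s. flow_log_deriv s y) s :> \<psi> (flow \<phi> s y)"
proof -
  have "continuous_on UNIV (\<lambda>s. \<psi> (flow \<phi> s y))"
    by (rule continuous_on_compose2[OF continuous_on_\<psi> continuous_on_flow]) auto
  then show ?thesis unfolding flow_log_deriv_def by (auto intro!: derivative_eq_intros DERIV_antideriv)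
qed

lemma flow_log_deriv_0: "flow_log_deriv 0 y = 0" by (simp add: flow_log_deriv_def)

lemma abs_flow_log_deriv_le: "\<bar>flow_log_deriv s y\<bar> \<le> B0 * \<bar>s\<bar>"
  using DERIV_abs_diff_0_le[of "\<lambda>s. flow_log_deriv s y" "\<lambda>s. \<psi> (flow \<phi> s y)" s B0] DERIV_flow_log_deriv b\<psi> flow_log_deriv_0 by simp

lemma log_flow_quotient_approx: assumes "y \<noteq> z"
  shows "\<bar>log_flow_quotient y z t - flow_log_deriv t y\<bar> \<le> B * \<bar>y - z\<bar> * exp (B0 * \<bar>t\<bar>) * \<bar>t\<bar>"
proof -
  have d: "DERIV (\<lambda>s. log_flow_quotient y z s - flow_log_deriv s y) s :> flow_slope y z s - \<psi> (flow \<phi> s y)" for s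
    by (intro DERIV_diff DERIV_log_flow_quotient[OF assms] DERIV_flow_log_deriv)
  have b: "\<bar>flow_slope y z s - \<psi> (flow \<phi> s y)\<bar> \<le> B * \<bar>y - z\<bar> * exp (B0 * \<bar>t\<bar>)" if "\<bar>s\<bar> \<le> \<bar>t\<bar>" for s
  proof -
    have "\<bar>flow_slope y z s - \<psi> (flow \<phi> s y)\<bar> \<le> B * \<bar>flow \<phi> s y - flow \<phi> s z\<bar>"
      unfolding flow_slope_def by (rule abs_divided_difference_minus_deriv_le[OF d\<phi> \<psi>_Lipschitz flow_inj[OF assms] bounds_nonneg(3)])
    also have "\<dots> \<le> B * (\<bar>y - z\<bar> * exp (B0 * \<bar>s\<bar>))"
      by (intro mult_left_mono flow_Lipschitz) (use bounds_nonneg in auto)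
    also have "\<dots> \<le> B * (\<bar>y - z\<bar> * exp (B0 * \<bar>t\<bar>))"
      using that bounds_nonneg by (intro mult_left_mono) (auto intro: mult_left_mono)
    finally show ?thesis by (simp add: mult.assoc)
  qed
  have "\<bar>(log_flow_quotient y z t - flow_log_deriv t y) - (log_flow_quotient y z 0 - flow_log_deriv 0 y)\<bar> \<le> B * \<bar>y - z\<bar> * exp (B0 * \<bar>t\<bar>) * \<bar>t\<bar>"
    by (rule DERIV_abs_diff_0_le[of "\<lambda>s. log_flow_quotient y z s - flow_log_deriv s y" _ t "B * \<bar>y - z\<bar> * exp (B0 * \<bar>t\<bar>)", OF d b])
  then show ?thesis using log_flow_quotient_0[OF assms] flow_log_deriv_0 by simp
qed

lemma DERIV_flow_space: "DERIV (flow \<phi> t) y :> exp (flow_log_deriv t y)"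
proof -
  define C where "C = B * exp (B0 * \<bar>t\<bar>) * \<bar>t\<bar>"
  have lim1: "((\<lambda>z. log_flow_quotient y z t) \<longlongrightarrow> flow_log_deriv t y) (at y)"
  proof -
    have "((\<lambda>z. log_flow_quotient y z t - flow_log_deriv t y) \<longlongrightarrow> 0) (at y)"
    proof (rule Lim_null_comparison)
      show "\<forall>\<^sub>F z in at y. norm (log_flow_quotient y z t - flow_log_deriv t y) \<le> C * \<bar>z - y\<bar>"
        unfolding eventually_at
      proof (intro exI[of _ 1] conjI ballI impI)
        fix z assume "z \<in> UNIV" "z \<noteq> y \<and> dist z y < 1"
        then have yz: "y \<noteq> z" by auto
        have "\<bar>log_flow_quotient y z t - flow_log_deriv t y\<bar> \<le> B * \<bar>y - z\<bar> * exp (B0 * \<bar>t\<bar>) * \<bar>t\<bar>" by (rule log_flow_quotient_approx[OF yz])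
        also have "\<dots> = C * \<bar>z - y\<bar>" by (simp add: C_def abs_minus_commute mult_ac)
        finally show "norm (log_flow_quotient y z t - flow_log_deriv t y) \<le> C * \<bar>z - y\<bar>" by simp
      qed simp
      have "((\<lambda>z. C * \<bar>z - y\<bar>) \<longlongrightarrow> C * \<bar>y - y\<bar>) (at y)" by (intro tendsto_intros)
      then show "((\<lambda>z. C * \<bar>z - y\<bar>) \<longlongrightarrow> 0) (at y)" by simp
    qed
    then show ?thesis by (simp add: LIM_zero_iff)
  qed
  then have lim2: "((\<lambda>z. exp (log_flow_quotient y z t)) \<longlongrightarrow> exp (flow_log_deriv t y)) (at y)" by (rule tendsto_exp)
  have ev: "\<forall>\<^sub>F z in at y. exp (log_flow_quotient y z t) = (flow \<phi> t z - flow \<phi> t y) / (z - y)"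
    unfolding eventually_at
  proof (intro exI[of _ 1] conjI ballI impI)
    fix z assume "z \<in> UNIV" "z \<noteq> y \<and> dist z y < 1"
    then have zy: "y \<noteq> z" by auto
    have "exp (log_flow_quotient y z t) = flow_quotient y z t" using flow_quotient_pos[OF zy] by (simp add: log_flow_quotient_def)
    also have "\<dots> = (- (flow \<phi> t z - flow \<phi> t y)) / (- (z - y))" by (simp add: flow_quotient_def)
    also have "\<dots> = (flow \<phi> t z - flow \<phi> t y) / (z - y)" by (rule minus_divide_divide)
    finally show "exp (log_flow_quotient y z t) = (flow \<phi> t z - flow \<phi> t y) / (z - y)" .
  qed simp
  have "((\<lambda>z. (flow \<phi> t z - flow \<phi> t y) / (z - y)) \<longlongrightarrow> exp (flow_log_deriv t y)) (at y)"
    using tendsto_cong[OF ev] lim2 by simp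
  then show ?thesis unfolding has_field_derivative_iff by simp
qed

lemma flow_log_deriv_expansion: "\<bar>flow_log_deriv t y - t * \<psi> y\<bar> \<le> (B * M0) * t\<^sup>2"
proof -
  have d: "DERIV (\<lambda>s. flow_log_deriv s y - s * \<psi> y) s :> \<psi> (flow \<phi> s y) - \<psi> y" for s
    by (auto intro!: derivative_eq_intros DERIV_flow_log_deriv)
  have b: "\<bar>\<psi> (flow \<phi> s y) - \<psi> y\<bar> \<le> B * M0 * \<bar>t\<bar>" if "\<bar>s\<bar> \<le> \<bar>t\<bar>" for s
  proof -
    have "\<bar>\<psi> (flow \<phi> s y) - \<psi> y\<bar> \<le> B * \<bar>flow \<phi> s y - y\<bar>" by (rule \<psi>_Lipschitz)
    also have "\<dots> \<le> B * (M0 * \<bar>s\<bar>)" by (intro mult_left_mono flow_displacement_le) (use bounds_nonneg in auto)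
    also have "\<dots> \<le> B * (M0 * \<bar>t\<bar>)" using that bounds_nonneg by (intro mult_left_mono) auto
    finally show ?thesis by (simp add: mult.assoc)
  qed
  have "\<bar>(flow_log_deriv t y - t * \<psi> y) - (flow_log_deriv 0 y - 0 * \<psi> y)\<bar> \<le> B * M0 * \<bar>t\<bar> * \<bar>t\<bar>"
    by (rule DERIV_abs_diff_0_le[of "\<lambda>s. flow_log_deriv s y - s * \<psi> y" _ t "B * M0 * \<bar>t\<bar>", OF d b])
  moreover have "\<bar>t\<bar> * \<bar>t\<bar> = t\<^sup>2" by (simp add: power2_eq_square)
  ultimately show ?thesis using flow_log_deriv_0 by (simp add: mult.assoc)
qed

definition expansion_const :: real where "expansion_const = B * B0 * exp B0 + B3 * M0"

lemma DERIV_flow_log_deriv_integrand: "DERIV (\<lambda>x. \<psi> (flow \<phi> s x) - \<psi> x) x :> \<psi>2 (flow \<phi> s x) * exp (flow_log_deriv s x) - \<psi>2 x"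
  by (intro DERIV_diff DERIV_chain2[OF d\<psi> DERIV_flow_space] d\<psi>)

lemma flow_log_deriv_integrand_deriv_bound: assumes "\<bar>s\<bar> \<le> 1"
  shows "\<bar>\<psi>2 (flow \<phi> s x) * exp (flow_log_deriv s x) - \<psi>2 x\<bar> \<le> expansion_const * \<bar>s\<bar>"
proof -
  have e: "\<psi>2 (flow \<phi> s x) * exp (flow_log_deriv s x) - \<psi>2 x
         = \<psi>2 (flow \<phi> s x) * (exp (flow_log_deriv s x) - 1) + (\<psi>2 (flow \<phi> s x) - \<psi>2 x)"
    by (simp add: algebra_simps)
  have a: "\<bar>exp (flow_log_deriv s x) - 1\<bar> \<le> B0 * \<bar>s\<bar> * exp B0"
  proof -
    have "\<bar>exp (flow_log_deriv s x) - 1\<bar> \<le> \<bar>flow_log_deriv s x\<bar> * exp \<bar>flow_log_deriv s x\<bar>" by (rule abs_exp_minus_one_le)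
    also have "\<dots> \<le> (B0 * \<bar>s\<bar>) * exp B0"
    proof (intro mult_mono)
      show "\<bar>flow_log_deriv s x\<bar> \<le> B0 * \<bar>s\<bar>" by (rule abs_flow_log_deriv_le)
      have "B0 * \<bar>s\<bar> \<le> B0 * 1" using assms bounds_nonneg by (intro mult_left_mono) auto
      then show "exp \<bar>flow_log_deriv s x\<bar> \<le> exp B0" using abs_flow_log_deriv_le[of s x] by simp
    qed (use bounds_nonneg in auto)
    finally show ?thesis .
  qed
  have "\<bar>\<psi>2 (flow \<phi> s x) * (exp (flow_log_deriv s x) - 1)\<bar> \<le> B * (B0 * \<bar>s\<bar> * exp B0)"
    unfolding abs_mult by (intro mult_mono b\<psi>2 a) (use bounds_nonneg in auto)
  moreover have "\<bar>\<psi>2 (flow \<phi> s x) - \<psi>2 x\<bar> \<le> B3 * (M0 * \<bar>s\<bar>)"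
    using order_trans[OF \<psi>2_Lipschitz[of "flow \<phi> s x" x] mult_left_mono[OF flow_displacement_le[of s x]]] bounds_nonneg
    by simp
  ultimately have "\<bar>\<psi>2 (flow \<phi> s x) * (exp (flow_log_deriv s x) - 1) + (\<psi>2 (flow \<phi> s x) - \<psi>2 x)\<bar>
      \<le> B * (B0 * \<bar>s\<bar> * exp B0) + B3 * (M0 * \<bar>s\<bar>)"
    using abs_triangle_ineq[of "\<psi>2 (flow \<phi> s x) * (exp (flow_log_deriv s x) - 1)" "\<psi>2 (flow \<phi> s x) - \<psi>2 x"]
    by linarith
  also have "\<dots> = expansion_const * \<bar>s\<bar>" by (simp add: expansion_const_def algebra_simps)
  finally show ?thesis unfolding e .
qed

lemma expansion_const_nonneg: "0 \<le> expansion_const" unfolding expansion_const_def using bounds_nonneg by simp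

lemma flow_log_deriv_expansion_Lipschitz: assumes "\<bar>t\<bar> \<le> 1"
  shows "\<bar>(flow_log_deriv t y - t * \<psi> y) - (flow_log_deriv t z - t * \<psi> z)\<bar> \<le> expansion_const * t\<^sup>2 * \<bar>y - z\<bar>"
proof -
  have d: "DERIV (\<lambda>s. (flow_log_deriv s y - s * \<psi> y) - (flow_log_deriv s z - s * \<psi> z)) s
       :> (\<psi> (flow \<phi> s y) - \<psi> y) - (\<psi> (flow \<phi> s z) - \<psi> z)" for s
    by (auto intro!: derivative_eq_intros DERIV_flow_log_deriv)
  have b: "\<bar>(\<psi> (flow \<phi> s y) - \<psi> y) - (\<psi> (flow \<phi> s z) - \<psi> z)\<bar> \<le> expansion_const * \<bar>t\<bar> * \<bar>y - z\<bar>"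
    if s: "\<bar>s\<bar> \<le> \<bar>t\<bar>" for s
  proof -
    have s1: "\<bar>s\<bar> \<le> 1" using s assms by simp
    have "\<bar>(\<psi> (flow \<phi> s y) - \<psi> y) - (\<psi> (flow \<phi> s z) - \<psi> z)\<bar> \<le> expansion_const * \<bar>s\<bar> * \<bar>y - z\<bar>"
      by (rule DERIV_bounded_Lipschitz[OF DERIV_flow_log_deriv_integrand flow_log_deriv_integrand_deriv_bound[OF s1]])
    also have "\<dots> \<le> expansion_const * \<bar>t\<bar> * \<bar>y - z\<bar>"
      using s expansion_const_nonneg by (intro mult_right_mono mult_left_mono) auto
    finally show ?thesis .
  qed
  have "\<bar>((flow_log_deriv t y - t * \<psi> y) - (flow_log_deriv t z - t * \<psi> z)) - ((flow_log_deriv 0 y - 0 * \<psi> y) - (flow_log_deriv 0 z - 0 * \<psi> z))\<bar>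
      \<le> expansion_const * \<bar>t\<bar> * \<bar>y - z\<bar> * \<bar>t\<bar>"
    by (rule DERIV_abs_diff_0_le[of "\<lambda>s. (flow_log_deriv s y - s * \<psi> y) - (flow_log_deriv s z - s * \<psi> z)" _ t "expansion_const * \<bar>t\<bar> * \<bar>y - z\<bar>", OF d b])
  moreover have "expansion_const * \<bar>t\<bar> * \<bar>y - z\<bar> * \<bar>t\<bar> = expansion_const * t\<^sup>2 * \<bar>y - z\<bar>" by (simp add: power2_eq_square mult_ac)
  ultimately show ?thesis using flow_log_deriv_0 by simp
qed

end

section \<open>The two families of maps\<close>

lemma abs_ln_one_plus_minus_self_le:
  fixes a :: real
  assumes "\<bar>a\<bar> \<le> 1/2"
  shows "\<bar>ln (1 + a) - a\<bar> \<le> 2 * a\<^sup>2"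
proof -
  have "a - 2 * a\<^sup>2 \<le> ln (1 + a)" by (rule ln_one_plus_ge[OF assms])
  moreover have "ln (1 + a) \<le> a" using assms by (intro ln_add_one_self_le_self2) auto
  ultimately show ?thesis by (simp add: abs_le_iff)
qed

lemma ln_one_plus_minus_self_Lipschitz:
  fixes a b c :: real
  assumes "\<bar>a\<bar> \<le> c" "\<bar>b\<bar> \<le> c" "c \<le> 1/2"
  shows "\<bar>(ln (1 + a) - a) - (ln (1 + b) - b)\<bar> \<le> 2 * c * \<bar>a - b\<bar>"
proof (rule DERIV_abs_diff_le[of "{-c..c}"])
  fix x assume "x \<in> {-c..c}"
  then have x: "\<bar>x\<bar> \<le> c" and pos: "0 < 1 + x" using assms(3) by auto
  show "DERIV (\<lambda>x. ln (1 + x) - x) x :> 1 / (1 + x) - 1"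
    using pos by (auto intro!: derivative_eq_intros simp: field_simps)
  have "\<bar>1 / (1 + x) - 1\<bar> = \<bar>x\<bar> / (1 + x)" using pos by (simp add: field_simps abs_divide)
  also have "\<dots> \<le> 2 * \<bar>x\<bar>"
  proof -
    have "1 \<le> 2 * (1 + x)" using x assms(3) by (simp add: abs_le_iff)
    then have "\<bar>x\<bar> \<le> 2 * \<bar>x\<bar> * (1 + x)"
      using mult_left_mono[of 1 "2 * (1 + x)" "\<bar>x\<bar>"] by (simp add: algebra_simps)
    then show ?thesis using pos by (simp add: divide_le_eq)
  qed
  also have "\<dots> \<le> 2 * c" using x by simp
  finally show "\<bar>1 / (1 + x) - 1\<bar> \<le> 2 * c" .
qed (use assms in auto)

lemma log_deriv_expansion_lin_map:
  fixes \<phi> :: "real \<Rightarrow> real" and B B0 :: real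
  assumes d\<phi>: "\<And>y. DERIV \<phi> y :> deriv \<phi> y"
    and \<psi>_Lipschitz: "\<And>y z. \<bar>deriv \<phi> y - deriv \<phi> z\<bar> \<le> B * \<bar>y - z\<bar>"
    and \<psi>_bounded: "\<And>y. \<bar>deriv \<phi> y\<bar> \<le> B0" and B: "0 \<le> B"
  shows "log_deriv_expansion \<phi> (lin_map \<phi>) (\<lambda>t y. ln (1 + t * deriv \<phi> y))
           (1 / (2 * (B0 + 1))) (2 * B0\<^sup>2 + 2 * B0 * B) B B0"
proof -
  have B0: "0 \<le> B0" using \<psi>_bounded[of 0] by linarith
  have t\<psi>: "\<bar>t * deriv \<phi> y\<bar> \<le> \<bar>t\<bar> * B0" for t y
    unfolding abs_mult by (intro mult_left_mono \<psi>_bounded) auto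
  have small: "\<bar>t\<bar> * B0 \<le> 1/2" if "\<bar>t\<bar> < 1 / (2 * (B0 + 1))" for t
  proof -
    have "\<bar>t\<bar> * B0 \<le> 1 / (2 * (B0 + 1)) * B0" using that B0 by (intro mult_right_mono) auto
    also have "\<dots> \<le> 1/2" using B0 by (simp add: field_simps)
    finally show ?thesis .
  qed
  show ?thesis
  proof
    show "DERIV \<phi> y :> deriv \<phi> y" for y by (rule d\<phi>)
    show "\<bar>deriv \<phi> y - deriv \<phi> z\<bar> \<le> B * \<bar>y - z\<bar>" for y z by (rule \<psi>_Lipschitz)
    show "\<bar>deriv \<phi> y\<bar> \<le> B0" for y by (rule \<psi>_bounded)
    show "0 < 1 / (2 * (B0 + 1))" "0 \<le> 2 * B0\<^sup>2 + 2 * B0 * B" "0 \<le> B" using B0 B by auto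
    fix t y z :: real assume t: "\<bar>t\<bar> < 1 / (2 * (B0 + 1))"
    have half: "\<bar>t * deriv \<phi> x\<bar> \<le> 1/2" for x using t\<psi>[of t x] small[OF t] by linarith
    have pos: "0 < 1 + t * deriv \<phi> x" for x using abs_le_D2[OF half[of x]] by linarith
    have "DERIV (lin_map \<phi> t) y :> 1 + t * deriv \<phi> y"
      unfolding lin_map_def[abs_def] by (auto intro!: derivative_eq_intros d\<phi>)
    then show "DERIV (lin_map \<phi> t) y :> exp (ln (1 + t * deriv \<phi> y))" using pos[of y] by simp
    let ?a = "t * deriv \<phi> y"
    have "\<bar>ln (1 + ?a) - ?a\<bar> \<le> 2 * ?a\<^sup>2" by (rule abs_ln_one_plus_minus_self_le[OF half])
    also have "2 * ?a\<^sup>2 \<le> 2 * B0\<^sup>2 * t\<^sup>2"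
      using power_mono[OF t\<psi>[of t y] abs_ge_zero, of 2] by (simp add: power_mult_distrib mult_ac)
    also have "\<dots> \<le> (2 * B0\<^sup>2 + 2 * B0 * B) * t\<^sup>2" using B0 B by (intro mult_right_mono) auto
    finally show "\<bar>ln (1 + ?a) - ?a\<bar> \<le> (2 * B0\<^sup>2 + 2 * B0 * B) * t\<^sup>2" .
    have "\<bar>(ln (1 + ?a) - ?a) - (ln (1 + t * deriv \<phi> z) - t * deriv \<phi> z)\<bar>
          \<le> 2 * (\<bar>t\<bar> * B0) * \<bar>?a - t * deriv \<phi> z\<bar>"
      by (rule ln_one_plus_minus_self_Lipschitz[OF t\<psi> t\<psi> small[OF t]])
    also have "\<bar>?a - t * deriv \<phi> z\<bar> = \<bar>t\<bar> * \<bar>deriv \<phi> y - deriv \<phi> z\<bar>"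
      by (simp add: abs_mult[symmetric] right_diff_distrib)
    also have "2 * (\<bar>t\<bar> * B0) * (\<bar>t\<bar> * \<bar>deriv \<phi> y - deriv \<phi> z\<bar>) \<le> 2 * (\<bar>t\<bar> * B0) * (\<bar>t\<bar> * (B * \<bar>y - z\<bar>))"
      using B0 by (intro mult_left_mono \<psi>_Lipschitz) auto
    also have "\<dots> = (2 * B0 * B) * t\<^sup>2 * \<bar>y - z\<bar>" by (simp add: power2_eq_square mult_ac)
    also have "\<dots> \<le> (2 * B0\<^sup>2 + 2 * B0 * B) * t\<^sup>2 * \<bar>y - z\<bar>"
      using B0 by (intro mult_right_mono) auto
    finally show "\<bar>(ln (1 + ?a) - ?a) - (ln (1 + t * deriv \<phi> z) - t * deriv \<phi> z)\<bar>
        \<le> (2 * B0\<^sup>2 + 2 * B0 * B) * t\<^sup>2 * \<bar>y - z\<bar>" .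
  qed
qed

lemma smooth_periodic_bounds:
  assumes "smooth_periodic \<phi>"
  obtains M0 B0 B B3 where "\<And>x. \<bar>\<phi> x\<bar> \<le> M0" "\<And>x. \<bar>deriv \<phi> x\<bar> \<le> B0"
    "\<And>x. \<bar>deriv (deriv \<phi>) x\<bar> \<le> B" "\<And>x. \<bar>deriv (deriv (deriv \<phi>)) x\<bar> \<le> B3"
  using assms smooth_periodic_bounded smooth_periodic_deriv by metis

lemma DERIV_Ybeta_lin_map:
  assumes \<phi>: "smooth_periodic \<phi>" and g: "in_G g"
    and summable: "(\<lambda>a. \<bar>V0_term \<phi> g a\<bar>) summable_on jumps g"
  shows "DERIV (\<lambda>t. Ybeta \<beta> (lin_map \<phi> t) g) 0 :> Vbeta \<beta> \<phi> g"
proof -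
  obtain B0 where B0: "\<And>x. \<bar>deriv \<phi> x\<bar> \<le> B0"
    using smooth_periodic_bounded[OF smooth_periodic_deriv[OF \<phi>]] by blast
  obtain B where B: "\<And>x. \<bar>deriv (deriv \<phi>) x\<bar> \<le> B"
    using smooth_periodic_bounded[OF smooth_periodic_deriv[OF smooth_periodic_deriv[OF \<phi>]]] by blast
  have "0 \<le> B" using B[of 0] by linarith
  interpret log_deriv_expansion \<phi> "lin_map \<phi>" "\<lambda>t y. ln (1 + t * deriv \<phi> y)"
      "1 / (2 * (B0 + 1))" "2 * B0\<^sup>2 + 2 * B0 * B" B B0
    by (rule log_deriv_expansion_lin_map[OF smooth_periodic_DERIV[OF \<phi>]
        DERIV_bounded_Lipschitz[OF smooth_periodic_DERIV[OF smooth_periodic_deriv[OF \<phi>]] B]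
        B0 \<open>0 \<le> B\<close>])
  show ?thesis by (rule DERIV_Ybeta[OF g summable])
qed

lemma DERIV_Ybeta_flow:
  assumes \<phi>: "smooth_periodic \<phi>" and g: "in_G g"
    and summable: "(\<lambda>a. \<bar>V0_term \<phi> g a\<bar>) summable_on jumps g"
  shows "DERIV (\<lambda>t. Ybeta \<beta> (flow \<phi> t) g) 0 :> Vbeta \<beta> \<phi> g"
proof -
  obtain M0 B0 B B3 where bounds: "\<And>x. \<bar>\<phi> x\<bar> \<le> M0" "\<And>x. \<bar>deriv \<phi> x\<bar> \<le> B0"
    "\<And>x. \<bar>deriv (deriv \<phi>) x\<bar> \<le> B" "\<And>x. \<bar>deriv (deriv (deriv \<phi>)) x\<bar> \<le> B3"
    using smooth_periodic_bounds[OF \<phi>] by metis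
  have \<phi>1: "smooth_periodic (deriv \<phi>)" and \<phi>2: "smooth_periodic (deriv (deriv \<phi>))"
    using \<phi> smooth_periodic_deriv by blast+
  interpret C3_bounded_field \<phi> "deriv \<phi>" "deriv (deriv \<phi>)" "deriv (deriv (deriv \<phi>))" M0 B0 B B3
    by unfold_locales (use smooth_periodic_DERIV[OF \<phi>] smooth_periodic_DERIV[OF \<phi>1]
        smooth_periodic_DERIV[OF \<phi>2] bounds in auto)
  interpret log_deriv_expansion \<phi> "flow \<phi>" flow_log_deriv 1 "B * M0 + expansion_const" B B0
  proof
    show "DERIV \<phi> y :> deriv \<phi> y" for y by (rule d\<phi>)
    show "\<bar>deriv \<phi> y - deriv \<phi> z\<bar> \<le> B * \<bar>y - z\<bar>" for y z by (rule \<psi>_Lipschitz)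
    show "\<bar>deriv \<phi> y\<bar> \<le> B0" for y by (rule b\<psi>)
    show "(0::real) < 1" "0 \<le> B * M0 + expansion_const" "0 \<le> B"
      using bounds_nonneg expansion_const_nonneg by auto
    fix t y z :: real assume "\<bar>t\<bar> < 1"
    show "DERIV (flow \<phi> t) y :> exp (flow_log_deriv t y)" by (rule DERIV_flow_space)
    show "\<bar>flow_log_deriv t y - t * deriv \<phi> y\<bar> \<le> (B * M0 + expansion_const) * t\<^sup>2"
      using flow_log_deriv_expansion[of t y] mult_right_mono[OF _ zero_le_power2[of t], of "B * M0"
          "B * M0 + expansion_const"] expansion_const_nonneg
      by linarith
    have "\<bar>(flow_log_deriv t y - t * deriv \<phi> y) - (flow_log_deriv t z - t * deriv \<phi> z)\<bar>
        \<le> expansion_const * t\<^sup>2 * \<bar>y - z\<bar>"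
      using \<open>\<bar>t\<bar> < 1\<close> by (intro flow_log_deriv_expansion_Lipschitz) simp
    also have "\<dots> \<le> (B * M0 + expansion_const) * t\<^sup>2 * \<bar>y - z\<bar>"
      using bounds_nonneg by (intro mult_right_mono) auto
    finally show "\<bar>(flow_log_deriv t y - t * deriv \<phi> y) - (flow_log_deriv t z - t * deriv \<phi> z)\<bar>
        \<le> (B * M0 + expansion_const) * t\<^sup>2 * \<bar>y - z\<bar>" .
  qed
  show ?thesis by (rule DERIV_Ybeta[OF g summable])
qed

theorem lemma5p1:
  fixes \<phi> g :: "real \<Rightarrow> real" and \<beta> :: real
  assumes "smooth_periodic \<phi>" and "\<beta> \<ge> 0" and "in_G g"
  shows "(\<lambda>a. \<bar>V0_term \<phi> g a\<bar>) summable_on jumps g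
    \<and> \<bar>V0 \<phi> g\<bar> \<le> (\<Sum>\<^sub>\<infinity>a\<in>jumps g. \<bar>V0_term \<phi> g a\<bar>)
    \<and> (\<Sum>\<^sub>\<infinity>a\<in>jumps g. \<bar>V0_term \<phi> g a\<bar>)
           \<le> 1/2 * integral {0..1} (\<lambda>x. \<bar>deriv (deriv \<phi>) x\<bar>)
    \<and> \<bar>Vbeta \<beta> \<phi> g\<bar> \<le> (1/2 + \<beta>) * integral {0..1} (\<lambda>x. \<bar>deriv (deriv \<phi>) x\<bar>)
    \<and> ((\<lambda>t. Ybeta \<beta> (flow \<phi> t) g) has_real_derivative Vbeta \<beta> \<phi> g) (at 0)
    \<and> ((\<lambda>t. Ybeta \<beta> (lin_map \<phi> t) g) has_real_derivative Vbeta \<beta> \<phi> g) (at 0)"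
proof -
  note summable = V0_terms_summable[OF assms(1,3)]
  show ?thesis
    using summable abs_V0_le[OF summable(1)] abs_Vbeta_le[OF assms]
      DERIV_Ybeta_flow[OF assms(1,3) summable(1)] DERIV_Ybeta_lin_map[OF assms(1,3) summable(1)]
    by blast
qed

end
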